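(* Let $E$ be a Banach space, $T\colon\ell^1\to E$ a continuous linear operator with $T(e_n)\neq0$ for all $n$, and $p>1$. (a) If $T$ is $p$-power dominated and admits a continuous linear extension to $\ell^p$, then $\ell^1\subset\ell^{1/p}(m_T)$, $T=I_{m_T}$ on $\ell^1$, and $I_{m_T}\colon\ell^{1/p}(m_T)\to E$ is $\frac1p$-th power factorable with a continuous extension; moreover this is optimal: whenever $\xi$ is a measure on $\mathcal P(\mathbb N)$, $Z(\xi)$ is a $\sigma$-order continuous quasi-Banach function space with $\ell^1\subset Z(\xi)$ (via $[i]$), and $S\colon Z(\xi)\to E$ is linear, equal to $T$ on $\ell^1$, and $\frac1p$-th power factorable with a continuous extension, then $Z(\xi)\subset\ell^{1/p}(m_T)$ (via $[i]$) and $S=I_{m_T}$ on $Z(\xi)$. (b) If $T$ is $\frac1p$-power dominated, then $\ell^1\subset\ell^1(m_T)$, $T=I_{m_T}$ on $\ell^1$, and $I_{m_T}\colon\ell^1(m_T)\to E$ is $\frac1p$-th power factorable with a continuous extension; moreover this is optimal: whenever $\xi$ is a measure on $\mathcal P(\mathbb N)$, $Z(\xi)$ is a $\sigma$-order continuous quasi-Banach function space with $\ell^1\subset Z(\xi)$ (via $[i]$), and $S\colon Z(\xi)\to E$ is linear, equal to $T$ on $\ell^1$, and $\frac1p$-th power factorable with a continuous extension, then $Z(\xi)\subset\ell^1(m_T)$ (via $[i]$) and $S=I_{m_T}$ on $Z(\xi)$.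
   Context: $e_n=\chi_{\{n\}}$; $\ell^0$ is the space of real sequences; $\mathcal P_F(\mathbb N)$ the $\delta$-ring of finite subsets of $\mathbb N$. $m_T\colon\mathcal P_F(\mathbb N)\to E$, $m_T(A)=T(\chi_A)$, is a vector measure whose only null set is $\emptyset$; $|x^*m_T|$ is the variation of $x^*\circ m_T$ on $\mathcal P(\mathbb N)$. $\ell^1(m_T)$ is the set of $x\in\ell^0$ with $x\in L^1(|x^*m_T|)$ for all $x^*\in E^*$ and such that for each $A\subset\mathbb N$ there is $\int_Ax\,dm_T\in E$ with $x^*(\int_Ax\,dm_T)=\int_Ax\,dx^*m_T$; norm $\sup_{x^*\in B_{E^*}}\int|x|d|x^*m_T|$; $I_{m_T}(x)=\int_{\mathbb N}x\,dm_T$. $\ell^r(m_T)=\{x:|x|^r\in\ell^1(m_T)\}$ with quasi-norm $\||x|^r\|_{\ell^1(m_T)}^{1/r}$. For $0<r<\infty$, $T$ is $r$-power dominated if there is $C>0$ with $\|\sum_{j\in F}x_j^rT(e_j)\|_E^{1/r}\le C\sup_{N\subset F}\|\sum_{j\in N}x_jT(e_j)\|_E$ for all finite $F\subset\mathbb N$, $(x_j)_{j\in F}\subset[0,\infty)$. Quasi-Banach function space $Z(\xi)$: a subspace of $\xi$-a.e. classes of sequences, solid ($|g|\le|f|$ a.e., $f\in Z\Rightarrow g\in Z$), complete under a quasi-norm ($\|x+y\|\le K(\|x\|+\|y\|)$) monotone for the a.e. order; $\sigma$-order continuous if $f_n\downarrow0$ a.e. $\Rightarrow\|f_n\|\to0$.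 For such $Z(\xi)$ and $q\in(0,\infty)$, $Z(\xi)^q=\{f:|f|^q\in Z(\xi)\}$; a linear $R\colon Z(\xi)\to E$ is $\frac1p$-th power factorable with a continuous extension if it has a continuous linear extension to $Z(\xi)^{p}+Z(\xi)$ (quasi-normed by $\inf(\||f_1|^p\|_{Z}^{1/p}+\|f_2\|_Z)$ over decompositions $f=f_1+f_2$). The inclusion "$\ell^1\subset Z(\xi)$ via $[i]$" means every sequence in $\ell^1$, viewed as a $\xi$-class, lies in $Z(\xi)$; "$Z(\xi)\subset\ell^{r}(m_T)$ via $[i]$" means $\xi$-null sets are empty (i.e. $\xi(\{n\})>0$ for all $n$) and every element of $Z(\xi)$ lies in $\ell^r(m_T)$. *)

theory Defs
  imports "HOL-Analysis.Analysis"
begin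

definition unitvec :: "nat \<Rightarrow> nat \<Rightarrow> real" where
  "unitvec n = (\<lambda>k. if k = n then 1 else 0)"

definition ell1 :: "(nat \<Rightarrow> real) set" where
  "ell1 = {x. summable (\<lambda>n. \<bar>x n\<bar>)}"

definition ellp :: "real \<Rightarrow> (nat \<Rightarrow> real) set" where
  "ellp p = {x. summable (\<lambda>n. \<bar>x n\<bar> powr p)}"

definition lin_on :: "(nat \<Rightarrow> real) set \<Rightarrow> ((nat \<Rightarrow> real) \<Rightarrow> 'e::real_vector) \<Rightarrow> bool" where
  "lin_on A R \<longleftrightarrow>
     (\<forall>x\<in>A. \<forall>y\<in>A. R (\<lambda>n. x n + y n) = R x + R y) \<and>
     (\<forall>c. \<forall>x\<in>A. R (\<lambda>n. c * x n) = c *\<^sub>R R x)"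

definition cont_lin_ell1 :: "((nat \<Rightarrow> real) \<Rightarrow> 'e::real_normed_vector) \<Rightarrow> bool" where
  "cont_lin_ell1 T \<longleftrightarrow> lin_on ell1 T \<and>
     (\<exists>C. \<forall>x\<in>ell1. norm (T x) \<le> C * (\<Sum>n. \<bar>x n\<bar>))"

definition has_ext_ellp :: "((nat \<Rightarrow> real) \<Rightarrow> 'e::real_normed_vector) \<Rightarrow> real \<Rightarrow> bool" where
  "has_ext_ellp T p \<longleftrightarrow> (\<exists>T'. (\<forall>x\<in>ell1. T' x = T x) \<and> lin_on (ellp p) T' \<and>
     (\<exists>C. \<forall>x\<in>ellp p. norm (T' x) \<le> C * (\<Sum>n. \<bar>x n\<bar> powr p) powr (1/p)))"

definition power_dominated :: "((nat \<Rightarrow> real) \<Rightarrow> 'e::real_normed_vector) \<Rightarrow> real \<Rightarrow> bool" where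
  "power_dominated T r \<longleftrightarrow> (\<exists>C>0. \<forall>F x. finite F \<longrightarrow> (\<forall>j\<in>F. 0 \<le> x j) \<longrightarrow>
     norm (\<Sum>j\<in>F. (x j powr r) *\<^sub>R T (unitvec j)) powr (1/r)
       \<le> C * Sup {norm (\<Sum>j\<in>N. x j *\<^sub>R T (unitvec j)) | N. N \<subseteq> F})"

definition dual :: "('e::real_normed_vector \<Rightarrow> real) set" where
  "dual = {f. bounded_linear f}"

text \<open>Variation |x* m_T| of the scalar measure x* o m_T, on P(N).\<close>
definition var_meas :: "((nat \<Rightarrow> real) \<Rightarrow> 'e::real_normed_vector) \<Rightarrow> ('e \<Rightarrow> real) \<Rightarrow> nat measure" where
  "var_meas T f = density (count_space UNIV) (\<lambda>n. ennreal \<bar>f (T (unitvec n))\<bar>)"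

text \<open>Scalar integral over A of x with respect to x* o m_T.\<close>
definition scal_int :: "((nat \<Rightarrow> real) \<Rightarrow> 'e::real_normed_vector) \<Rightarrow> ('e \<Rightarrow> real) \<Rightarrow> nat set \<Rightarrow> (nat \<Rightarrow> real) \<Rightarrow> real" where
  "scal_int T f A x = (\<integral>n. indicator A n * x n * f (T (unitvec n)) \<partial>count_space UNIV)"

definition l1m :: "((nat \<Rightarrow> real) \<Rightarrow> 'e::real_normed_vector) \<Rightarrow> (nat \<Rightarrow> real) set" where
  "l1m T = {x. (\<forall>f\<in>dual. integrable (var_meas T f) x) \<and>
                (\<forall>A. \<exists>v. \<forall>f\<in>dual. f v = scal_int T f A x)}"

definition vec_int :: "((nat \<Rightarrow> real) \<Rightarrow> 'e::real_normed_vector) \<Rightarrow> nat set \<Rightarrow> (nat \<Rightarrow> real) \<Rightarrow> 'e" where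
  "vec_int T A x = (SOME v. \<forall>f\<in>dual. f v = scal_int T f A x)"

definition I_m :: "((nat \<Rightarrow> real) \<Rightarrow> 'e::real_normed_vector) \<Rightarrow> (nat \<Rightarrow> real) \<Rightarrow> 'e" where
  "I_m T x = vec_int T UNIV x"

definition norm_l1m :: "((nat \<Rightarrow> real) \<Rightarrow> 'e::real_normed_vector) \<Rightarrow> (nat \<Rightarrow> real) \<Rightarrow> real" where
  "norm_l1m T x = (SUP f\<in>{f\<in>dual. onorm f \<le> 1}. integral\<^sup>L (var_meas T f) (\<lambda>n. \<bar>x n\<bar>))"

definition lrm :: "((nat \<Rightarrow> real) \<Rightarrow> 'e::real_normed_vector) \<Rightarrow> real \<Rightarrow> (nat \<Rightarrow> real) set" where
  "lrm T r = {x. (\<lambda>n. \<bar>x n\<bar> powr r) \<in> l1m T}"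

definition norm_lrm :: "((nat \<Rightarrow> real) \<Rightarrow> 'e::real_normed_vector) \<Rightarrow> real \<Rightarrow> (nat \<Rightarrow> real) \<Rightarrow> real" where
  "norm_lrm T r x = norm_l1m T (\<lambda>n. \<bar>x n\<bar> powr r) powr (1/r)"

text \<open>Z is a set of sequences (representatives, closed under xi-a.e. equality) with quasi-norm N.\<close>
definition qbfs :: "nat measure \<Rightarrow> (nat \<Rightarrow> real) set \<Rightarrow> ((nat \<Rightarrow> real) \<Rightarrow> real) \<Rightarrow> bool" where
  "qbfs \<xi> Z N \<longleftrightarrow>
     (\<lambda>n. 0) \<in> Z \<and>
     (\<forall>f\<in>Z. \<forall>g\<in>Z. (\<lambda>n. f n + g n) \<in> Z) \<and>
     (\<forall>c. \<forall>f\<in>Z. (\<lambda>n. c * f n) \<in> Z) \<and>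
     (\<forall>f\<in>Z. \<forall>g. (AE n in \<xi>. \<bar>g n\<bar> \<le> \<bar>f n\<bar>) \<longrightarrow> g \<in> Z \<and> N g \<le> N f) \<and>
     (\<forall>f\<in>Z. 0 \<le> N f \<and> (N f = 0 \<longleftrightarrow> (AE n in \<xi>. f n = 0))) \<and>
     (\<forall>c. \<forall>f\<in>Z. N (\<lambda>n. c * f n) = \<bar>c\<bar> * N f) \<and>
     (\<exists>K\<ge>1. \<forall>f\<in>Z. \<forall>g\<in>Z. N (\<lambda>n. f n + g n) \<le> K * (N f + N g)) \<and>
     (\<forall>F. (\<forall>k. F k \<in> Z) \<longrightarrow>
          (\<forall>\<epsilon>>0. \<exists>M. \<forall>m\<ge>M. \<forall>k\<ge>M. N (\<lambda>n. F m n - F k n) < \<epsilon>) \<longrightarrow>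
          (\<exists>f\<in>Z. (\<lambda>k. N (\<lambda>n. F k n - f n)) \<longlonglongrightarrow> 0))"

definition sigma_oc :: "nat measure \<Rightarrow> (nat \<Rightarrow> real) set \<Rightarrow> ((nat \<Rightarrow> real) \<Rightarrow> real) \<Rightarrow> bool" where
  "sigma_oc \<xi> Z N \<longleftrightarrow> (\<forall>F. (\<forall>k. F k \<in> Z) \<longrightarrow>
      (AE n in \<xi>. (\<forall>k. F (Suc k) n \<le> F k n) \<and> (\<lambda>k. F k n) \<longlonglongrightarrow> 0) \<longrightarrow>
      (\<lambda>k. N (F k)) \<longlonglongrightarrow> 0)"

definition decomp :: "(nat \<Rightarrow> real) set \<Rightarrow> real \<Rightarrow> (nat \<Rightarrow> real) \<Rightarrow> (nat \<Rightarrow> real) \<Rightarrow> (nat \<Rightarrow> real) \<Rightarrow> bool" where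
  "decomp Z p f f1 f2 \<longleftrightarrow> (\<forall>n. f n = f1 n + f2 n) \<and> (\<lambda>n. \<bar>f1 n\<bar> powr p) \<in> Z \<and> f2 \<in> Z"

definition powsum :: "(nat \<Rightarrow> real) set \<Rightarrow> real \<Rightarrow> (nat \<Rightarrow> real) set" where
  "powsum Z p = {f. \<exists>f1 f2. decomp Z p f f1 f2}"

definition powsum_norm :: "(nat \<Rightarrow> real) set \<Rightarrow> ((nat \<Rightarrow> real) \<Rightarrow> real) \<Rightarrow> real \<Rightarrow> (nat \<Rightarrow> real) \<Rightarrow> real" where
  "powsum_norm Z N p f = Inf {N (\<lambda>n. \<bar>f1 n\<bar> powr p) powr (1/p) + N f2 | f1 f2. decomp Z p f f1 f2}"

text \<open>R : Z \<rightarrow> E is 1/p-th power factorable with a continuous extension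
  (continuity of a linear map on a quasi-normed space = boundedness).\<close>
definition pfact :: "(nat \<Rightarrow> real) set \<Rightarrow> ((nat \<Rightarrow> real) \<Rightarrow> real) \<Rightarrow> real \<Rightarrow> ((nat \<Rightarrow> real) \<Rightarrow> 'e::real_normed_vector) \<Rightarrow> bool" where
  "pfact Z N p R \<longleftrightarrow> (\<exists>R'. (\<forall>f\<in>Z. R' f = R f) \<and> lin_on (powsum Z p) R' \<and>
      (\<exists>C. \<forall>f\<in>powsum Z p. norm (R' f) \<le> C * powsum_norm Z N p f))"

definition optimal :: "((nat \<Rightarrow> real) \<Rightarrow> 'e::real_normed_vector) \<Rightarrow> real \<Rightarrow> (nat \<Rightarrow> real) set \<Rightarrow> bool" where
  "optimal T p X \<longleftrightarrow> (\<forall>(\<xi>::nat measure) Z N (S::(nat \<Rightarrow> real) \<Rightarrow> 'e).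
     sets \<xi> = UNIV \<longrightarrow> qbfs \<xi> Z N \<longrightarrow> sigma_oc \<xi> Z N \<longrightarrow> ell1 \<subseteq> Z \<longrightarrow>
     (\<forall>f\<in>Z. \<forall>g\<in>Z. (AE n in \<xi>. f n = g n) \<longrightarrow> S f = S g) \<longrightarrow>
     lin_on Z S \<longrightarrow> (\<forall>x\<in>ell1. S x = T x) \<longrightarrow> pfact Z N p S \<longrightarrow>
     ((\<forall>n. emeasure \<xi> {n} > 0) \<and> Z \<subseteq> X \<and> (\<forall>f\<in>Z. S f = I_m T f)))"

end

theory Submission
  imports Defs "HOL-Library.Diagonal_Subsequence"
begin

text \<open>The space l^1(m_T) is given weakly, through the scalar measures x* o m_T. The analytic
  core is the Orlicz-Pettis theorem, proved here by a gliding hump argument on top of a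
  Hahn-Banach theorem obtained from Zorn's lemma: if every subseries of the series of the
  y_j T(e_j) is weakly summable, its tails are small uniformly on the dual unit ball.
  Consequently, for y in l^1(m_T) the partial sums of the chi_A(n) y(n) T(e_n) converge in norm to
  the integral of y over A; this makes I_{m_T} linear and bounded by the norm of l^1(m_T), and
  r-power domination transfers the norm control from |y|^(1/r) to y.

  All inclusions come from truncation: if a linear map R agrees with T on finitely supported
  sequences and sends the tails of x to zero, then the partial sums of the x(n) T(e_n) converge
  to R x. Tails vanish in l^1 and l^p by summability, and in Z by sigma-order continuity.
  Applied to the extension of T to l^p this gives l^1 in l^(1/p)(m_T); applied to S and to its
  extension to Z^p + Z it gives, for f in Z, both S f = I_{m_T} f and |f|^(1/p) in l^1(m_T),
  which is the optimality.\<close>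

section \<open>A Hahn-Banach theorem\<close>

text \<open>Partial functionals are handled through their graphs, so that the union of a chain of
  extensions is again a partial functional.\<close>

definition dominated_partial_functional ::
    "('a::real_vector \<Rightarrow> real) \<Rightarrow> ('a \<times> real) set \<Rightarrow> ('a \<times> real) set \<Rightarrow> bool" where
  "dominated_partial_functional p G0 G \<longleftrightarrow> G0 \<subseteq> G \<and>
     (\<forall>x a b. (x, a) \<in> G \<longrightarrow> (x, b) \<in> G \<longrightarrow> a = b) \<and>
     (\<forall>x a y b. (x, a) \<in> G \<longrightarrow> (y, b) \<in> G \<longrightarrow> (x + y, a + b) \<in> G) \<and>
     (\<forall>x a c. (x, a) \<in> G \<longrightarrow> (c *\<^sub>R x, c * a) \<in> G) \<and>
     (\<forall>x a. (x, a) \<in> G \<longrightarrow> a \<le> p x)"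

lemma subspace_add_scaleR_eq_imp:
  assumes X: "subspace X" and v: "v \<notin> X" and y: "y \<in> X" "y' \<in> X"
    and eq: "y + c *\<^sub>R v = y' + c' *\<^sub>R v"
  shows "c = c' \<and> y = y'"
proof (cases "c = c'")
  case True
  then show ?thesis using eq by simp
next
  case False
  have "(c - c') *\<^sub>R v = y' - y" using eq by (simp add: algebra_simps)
  then have "(1 / (c - c')) *\<^sub>R ((c - c') *\<^sub>R v) = (1 / (c - c')) *\<^sub>R (y' - y)" by simp
  then have "v = (1 / (c - c')) *\<^sub>R (y' - y)" using False by simp
  moreover have "(1 / (c - c')) *\<^sub>R (y' - y) \<in> X" using X y by (intro subspace_scale subspace_diff)
  ultimately show ?thesis using v by simp
qed

lemma dominated_partial_functional_self:
  "dominated_partial_functional p G0 G \<Longrightarrow> dominated_partial_functional p G G"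
  unfolding dominated_partial_functional_def by blast

lemma dominated_partial_functional_domain:
  assumes G: "dominated_partial_functional p G0 G" and ne: "G \<noteq> {}"
  shows "subspace (fst ` G)"
  unfolding subspace_def
proof (intro conjI ballI allI)
  obtain x a where "(x, a) \<in> G" using ne by auto
  then have "(0 *\<^sub>R x, 0 * a) \<in> G" using G unfolding dominated_partial_functional_def by blast
  then show "0 \<in> fst ` G" by force
next
  fix x y assume "x \<in> fst ` G" "y \<in> fst ` G"
  then obtain a b where "(x, a) \<in> G" "(y, b) \<in> G" by auto
  then have "(x + y, a + b) \<in> G" using G unfolding dominated_partial_functional_def by blast
  then show "x + y \<in> fst ` G" by force
next
  fix c x assume "x \<in> fst ` G"
  then obtain a where "(x, a) \<in> G" by auto
  then have "(c *\<^sub>R x, c * a) \<in> G" using G unfolding dominated_partial_functional_def by blast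
  then show "c *\<^sub>R x \<in> fst ` G" by force
qed

lemma dominated_partial_functional_adjoin_le:
  fixes p :: "'a::real_vector \<Rightarrow> real"
  assumes p_scale: "\<And>c x. c > 0 \<Longrightarrow> p (c *\<^sub>R x) = c * p x"
    and G: "dominated_partial_functional p G0 G"
    and below: "\<And>e b. (e, b) \<in> G \<Longrightarrow> b - p (e - x0) \<le> \<xi>"
    and above: "\<And>d a. (d, a) \<in> G \<Longrightarrow> \<xi> \<le> p (d + x0) - a"
    and da: "(d, a) \<in> G"
  shows "a + c * \<xi> \<le> p (d + c *\<^sub>R x0)"
proof -
  have Gscale: "\<And>x a c. (x, a) \<in> G \<Longrightarrow> (c *\<^sub>R x, c * a) \<in> G"
    and Gdom: "\<And>x a. (x, a) \<in> G \<Longrightarrow> a \<le> p x"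
    using G unfolding dominated_partial_functional_def by blast+
  \<comment> \<open>rescale to the cases c = 1 and c = -1, which are the two bounds on \<xi>\<close>
  show ?thesis
  proof (cases c "0::real" rule: linorder_cases)
    case less
    define k where "k = - c"
    have k: "k > 0" using less by (simp add: k_def)
    have "a / k - p ((1 / k) *\<^sub>R d - x0) \<le> \<xi>" using below[OF Gscale[OF da, of "1 / k"]] by simp
    then have "a - k * p ((1 / k) *\<^sub>R d - x0) \<le> k * \<xi>" using k by (simp add: field_simps)
    also have "k * p ((1 / k) *\<^sub>R d - x0) = p (d + c *\<^sub>R x0)"
      using p_scale[OF k, of "(1 / k) *\<^sub>R d - x0"] k by (simp add: algebra_simps k_def)
    finally show ?thesis by (simp add: k_def)
  next
    case equal
    then show ?thesis using Gdom[OF da] by simp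
  next
    case greater
    have "\<xi> \<le> p ((1 / c) *\<^sub>R d + x0) - a / c" using above[OF Gscale[OF da, of "1 / c"]] by simp
    then have "c * \<xi> \<le> c * p ((1 / c) *\<^sub>R d + x0) - a" using greater by (simp add: field_simps)
    also have "c * p ((1 / c) *\<^sub>R d + x0) = p (d + c *\<^sub>R x0)"
      using p_scale[OF greater, of "(1 / c) *\<^sub>R d + x0"] greater by (simp add: algebra_simps)
    finally show ?thesis by simp
  qed
qed

lemma dominated_partial_functional_adjoin:
  fixes p :: "'a::real_vector \<Rightarrow> real"
  assumes p_scale: "\<And>c x. c > 0 \<Longrightarrow> p (c *\<^sub>R x) = c * p x"
    and G: "dominated_partial_functional p G0 G" and ne: "G \<noteq> {}" and x0: "x0 \<notin> fst ` G"
    and below: "\<And>e b. (e, b) \<in> G \<Longrightarrow> b - p (e - x0) \<le> \<xi>"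
    and above: "\<And>d a. (d, a) \<in> G \<Longrightarrow> \<xi> \<le> p (d + x0) - a"
  shows "dominated_partial_functional p G0 {(d + c *\<^sub>R x0, a + c * \<xi>) | d a c. (d, a) \<in> G}"
    (is "dominated_partial_functional p G0 ?G'")
proof -
  from G have Gfun: "\<And>x a b. (x, a) \<in> G \<Longrightarrow> (x, b) \<in> G \<Longrightarrow> a = b"
    and Gadd: "\<And>x a y b. (x, a) \<in> G \<Longrightarrow> (y, b) \<in> G \<Longrightarrow> (x + y, a + b) \<in> G"
    and Gscale: "\<And>x a c. (x, a) \<in> G \<Longrightarrow> (c *\<^sub>R x, c * a) \<in> G"
    and G0G: "G0 \<subseteq> G"
    unfolding dominated_partial_functional_def by blast+
  have uniq: "c = c' \<and> d = d'"
    if "(d, a) \<in> G" "(d', a') \<in> G" "d + c *\<^sub>R x0 = d' + c' *\<^sub>R x0" for d a d' a' c c'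
  proof -
    have "d \<in> fst ` G" "d' \<in> fst ` G" using that(1,2) by force+
    then show ?thesis
      using subspace_add_scaleR_eq_imp[OF dominated_partial_functional_domain[OF G ne] x0] that(3)
      by blast
  qed
  show ?thesis
    unfolding dominated_partial_functional_def
  proof (intro conjI allI impI)
    show "G0 \<subseteq> ?G'"
    proof
      fix z assume "z \<in> G0"
      moreover obtain x a where "z = (x, a)" by (cases z)
      moreover have "(x, a) = (x + 0 *\<^sub>R x0, a + 0 * \<xi>)" by simp
      ultimately show "z \<in> ?G'" using G0G by blast
    qed
  next
    fix x a b assume "(x, a) \<in> ?G'" "(x, b) \<in> ?G'"
    then obtain d1 a1 c1 d2 a2 c2 where h: "(d1, a1) \<in> G" "x = d1 + c1 *\<^sub>R x0" "a = a1 + c1 * \<xi>"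
      "(d2, a2) \<in> G" "x = d2 + c2 *\<^sub>R x0" "b = a2 + c2 * \<xi>" by blast
    have "d1 + c1 *\<^sub>R x0 = d2 + c2 *\<^sub>R x0" using h(2,5) by simp
    then have "c1 = c2" "d1 = d2" using uniq[OF h(1) h(4)] by blast+
    with h Gfun show "a = b" by auto
  next
    fix x a y b assume "(x, a) \<in> ?G'" "(y, b) \<in> ?G'"
    then obtain d1 a1 c1 d2 a2 c2 where h: "(d1, a1) \<in> G" "x = d1 + c1 *\<^sub>R x0" "a = a1 + c1 * \<xi>"
      "(d2, a2) \<in> G" "y = d2 + c2 *\<^sub>R x0" "b = a2 + c2 * \<xi>" by blast
    have "(d1 + d2, a1 + a2) \<in> G" using Gadd h by auto
    moreover have "x + y = (d1 + d2) + (c1 + c2) *\<^sub>R x0" "a + b = (a1 + a2) + (c1 + c2) * \<xi>"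
      using h by (auto simp: algebra_simps)
    ultimately show "(x + y, a + b) \<in> ?G'" by blast
  next
    fix x a c assume "(x, a) \<in> ?G'"
    then obtain d1 a1 c1 where h: "(d1, a1) \<in> G" "x = d1 + c1 *\<^sub>R x0" "a = a1 + c1 * \<xi>" by blast
    have "(c *\<^sub>R d1, c * a1) \<in> G" using Gscale h by auto
    moreover have "c *\<^sub>R x = c *\<^sub>R d1 + (c * c1) *\<^sub>R x0" "c * a = c * a1 + (c * c1) * \<xi>"
      using h by (auto simp: algebra_simps)
    ultimately show "(c *\<^sub>R x, c * a) \<in> ?G'" by blast
  next
    fix x a assume "(x, a) \<in> ?G'"
    then obtain d a1 c where "(d, a1) \<in> G" "x = d + c *\<^sub>R x0" "a = a1 + c * \<xi>" by blast
    then show "a \<le> p x" using dominated_partial_functional_adjoin_le[OF p_scale G below above] by simp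
  qed
qed

lemma dominated_partial_functional_extend:
  fixes p :: "'a::real_vector \<Rightarrow> real"
  assumes p_add: "\<And>x y. p (x + y) \<le> p x + p y"
    and p_scale: "\<And>c x. c > 0 \<Longrightarrow> p (c *\<^sub>R x) = c * p x"
    and G: "dominated_partial_functional p G0 G" and ne: "G \<noteq> {}" and x0: "x0 \<notin> fst ` G"
  shows "\<exists>G'. dominated_partial_functional p G0 G' \<and> G \<subset> G'"
proof -
  have Gadd: "\<And>x a y b. (x, a) \<in> G \<Longrightarrow> (y, b) \<in> G \<Longrightarrow> (x + y, a + b) \<in> G"
    and Gscale: "\<And>x a c. (x, a) \<in> G \<Longrightarrow> (c *\<^sub>R x, c * a) \<in> G"
    and Gdom: "\<And>x a. (x, a) \<in> G \<Longrightarrow> a \<le> p x"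
    using G unfolding dominated_partial_functional_def by blast+
  have key: "b - p (e - x0) \<le> p (d + x0) - a" if "(d, a) \<in> G" "(e, b) \<in> G" for d a e b
  proof -
    have "a + b \<le> p ((d + x0) + (e - x0))" using Gdom[OF Gadd[OF that]] by simp
    also have "\<dots> \<le> p (d + x0) + p (e - x0)" by (rule p_add)
    finally show ?thesis by simp
  qed
  define W where "W = {b - p (e - x0) | e b. (e, b) \<in> G}"
  define \<xi> where "\<xi> = Sup W"
  obtain d0 a0 where d0: "(d0, a0) \<in> G" using ne by auto
  have W: "W \<noteq> {}" "bdd_above W"
    unfolding W_def using key[OF d0] d0 by (auto intro!: bdd_aboveI[of _ "p (d0 + x0) - a0"])
  let ?G' = "{(d + c *\<^sub>R x0, a + c * \<xi>) | d a c. (d, a) \<in> G}"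
  have "dominated_partial_functional p G0 ?G'"
  proof (rule dominated_partial_functional_adjoin[OF p_scale G ne x0])
    show "b - p (e - x0) \<le> \<xi>" if "(e, b) \<in> G" for e b
      unfolding \<xi>_def using that W by (intro cSup_upper) (auto simp: W_def)
    show "\<xi> \<le> p (d + x0) - a" if "(d, a) \<in> G" for d a
      unfolding \<xi>_def using W by (intro cSup_least) (auto simp: W_def intro: key[OF that])
  qed
  moreover have "G \<subseteq> ?G'"
  proof
    fix z assume "z \<in> G"
    moreover obtain x a where "z = (x, a)" by (cases z)
    moreover have "(x, a) = (x + 0 *\<^sub>R x0, a + 0 * \<xi>)" by simp
    ultimately show "z \<in> ?G'" by blast
  qed
  moreover have "(x0, \<xi>) \<in> ?G' - G"
  proof -
    have "(0 *\<^sub>R d0 + 1 *\<^sub>R x0, 0 * a0 + 1 * \<xi>) \<in> ?G'" using Gscale[OF d0, of 0] by blast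
    moreover have "(x0, \<xi>) \<notin> G" using x0 by force
    ultimately show ?thesis by simp
  qed
  ultimately show ?thesis by blast
qed

lemma dominated_partial_functional_Union:
  assumes C: "C \<in> chains {G. dominated_partial_functional p G0 G}" and ne: "C \<noteq> {}"
  shows "dominated_partial_functional p G0 (\<Union>C)"
proof -
  have CA: "\<And>X. X \<in> C \<Longrightarrow> dominated_partial_functional p G0 X" using chainsD2[OF C] by auto
  have both: "\<exists>X\<in>C. z1 \<in> X \<and> z2 \<in> X" if z: "z1 \<in> \<Union>C" "z2 \<in> \<Union>C" for z1 z2
  proof -
    obtain X1 X2 where "X1 \<in> C" "z1 \<in> X1" "X2 \<in> C" "z2 \<in> X2" using z by blast
    then show ?thesis using chainsD[OF C, of X1 X2] by blast
  qed
  show ?thesis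
    unfolding dominated_partial_functional_def
  proof (intro conjI allI impI)
    show "G0 \<subseteq> \<Union>C" using ne CA unfolding dominated_partial_functional_def by blast
  next
    fix x a b assume "(x, a) \<in> \<Union>C" "(x, b) \<in> \<Union>C"
    then obtain X where "X \<in> C" "(x, a) \<in> X" "(x, b) \<in> X" using both by blast
    then show "a = b" using CA unfolding dominated_partial_functional_def by blast
  next
    fix x a y b assume "(x, a) \<in> \<Union>C" "(y, b) \<in> \<Union>C"
    then obtain X where "X \<in> C" "(x, a) \<in> X" "(y, b) \<in> X" using both by blast
    then show "(x + y, a + b) \<in> \<Union>C" using CA unfolding dominated_partial_functional_def by blast
  next
    fix x a c assume "(x, a) \<in> \<Union>C"
    then obtain X where "X \<in> C" "(x, a) \<in> X" by blast
    then show "(c *\<^sub>R x, c * a) \<in> \<Union>C" using CA unfolding dominated_partial_functional_def by blast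
  next
    fix x a assume "(x, a) \<in> \<Union>C"
    then obtain X where "X \<in> C" "(x, a) \<in> X" by blast
    then show "a \<le> p x" using CA unfolding dominated_partial_functional_def by blast
  qed
qed

lemma exists_total_dominated_partial_functional:
  fixes p :: "'a::real_vector \<Rightarrow> real"
  assumes p_add: "\<And>x y. p (x + y) \<le> p x + p y"
    and p_scale: "\<And>c x. c > 0 \<Longrightarrow> p (c *\<^sub>R x) = c * p x"
    and G0: "dominated_partial_functional p G0 G0" and ne: "G0 \<noteq> {}"
  obtains M where "dominated_partial_functional p G0 M" "fst ` M = UNIV"
proof -
  let ?A = "{G. dominated_partial_functional p G0 G}"
  have "\<exists>M\<in>?A. \<forall>X\<in>?A. M \<subseteq> X \<longrightarrow> X = M"
  proof (rule Zorn_Lemma2, intro ballI)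
    fix C assume C: "C \<in> chains ?A"
    show "\<exists>U\<in>?A. \<forall>X\<in>C. X \<subseteq> U"
    proof (cases "C = {}")
      case True
      then show ?thesis using G0 by blast
    next
      case False
      then show ?thesis using dominated_partial_functional_Union[OF C] by blast
    qed
  qed
  then obtain M where M: "dominated_partial_functional p G0 M"
    and maximal: "\<And>X. dominated_partial_functional p G0 X \<Longrightarrow> M \<subseteq> X \<Longrightarrow> X = M" by blast
  have Mne: "M \<noteq> {}" using M ne unfolding dominated_partial_functional_def by blast
  have "x \<in> fst ` M" for x
  proof (rule ccontr)
    assume "x \<notin> fst ` M"
    then obtain G' where "dominated_partial_functional p G0 G'" "M \<subset> G'"
      using dominated_partial_functional_extend[OF p_add p_scale M Mne] by blast
    then show False using maximal by blast
  qed
  then show thesis using that[OF M] by blast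
qed

lemma hahn_banach_dominated:
  fixes p :: "'a::real_vector \<Rightarrow> real"
  assumes p_add: "\<And>x y. p (x + y) \<le> p x + p y"
    and p_scale: "\<And>c x. c > 0 \<Longrightarrow> p (c *\<^sub>R x) = c * p x"
    and G0: "dominated_partial_functional p G0 G0" and ne: "G0 \<noteq> {}"
  obtains F where "linear F" "\<And>x a. (x, a) \<in> G0 \<Longrightarrow> F x = a" "\<And>x. F x \<le> p x"
proof -
  obtain M where M: "dominated_partial_functional p G0 M" and total: "fst ` M = UNIV"
    by (rule exists_total_dominated_partial_functional[OF p_add p_scale G0 ne]) blast
  from M have Mfun: "\<And>x a b. (x, a) \<in> M \<Longrightarrow> (x, b) \<in> M \<Longrightarrow> a = b"
    and Madd: "\<And>x a y b. (x, a) \<in> M \<Longrightarrow> (y, b) \<in> M \<Longrightarrow> (x + y, a + b) \<in> M"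
    and Mscale: "\<And>x a c. (x, a) \<in> M \<Longrightarrow> (c *\<^sub>R x, c * a) \<in> M"
    and Mdom: "\<And>x a. (x, a) \<in> M \<Longrightarrow> a \<le> p x"
    and G0M: "G0 \<subseteq> M"
    unfolding dominated_partial_functional_def by blast+
  define F where "F x = (THE a. (x, a) \<in> M)" for x
  have FM: "(x, F x) \<in> M" for x
  proof -
    have "x \<in> fst ` M" using total by simp
    then obtain a where a: "(x, a) \<in> M" by force
    show ?thesis unfolding F_def by (rule theI[of _ a]) (use Mfun a in blast)+
  qed
  have Feq: "F x = a" if "(x, a) \<in> M" for x a using Mfun FM that by blast
  have "linear F"
  proof (rule linearI)
    fix x y show "F (x + y) = F x + F y" using Feq[OF Madd[OF FM FM]] .
  next
    fix c x show "F (c *\<^sub>R x) = c *\<^sub>R F x" using Feq[OF Mscale[OF FM]] by simp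
  qed
  moreover have "F x = a" if "(x, a) \<in> G0" for x a using Feq G0M that by blast
  moreover have "F x \<le> p x" for x using Mdom FM by blast
  ultimately show thesis using that by blast
qed

lemma hahn_banach_norm:
  fixes G0 :: "('a::real_normed_vector \<times> real) set"
  assumes "dominated_partial_functional norm G0 G0" "G0 \<noteq> {}"
  obtains F where "F \<in> dual" "onorm F \<le> 1" "\<And>x a. (x, a) \<in> G0 \<Longrightarrow> F x = a"
proof -
  obtain F where F: "linear F" "\<And>x a. (x, a) \<in> G0 \<Longrightarrow> F x = a" "\<And>x. F x \<le> norm x"
  proof (rule hahn_banach_dominated[of norm G0])
    show "norm (x + y) \<le> norm x + norm y" for x y :: 'a by (rule norm_triangle_ineq)
    show "norm (c *\<^sub>R x) = c * norm x" if "c > 0" for c and x :: 'a using that by simp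
  qed (use assms in blast)+
  have abs: "\<bar>F x\<bar> \<le> norm x" for x
    using F(3)[of x] F(3)[of "- x"] linear_neg[OF F(1), of x] by auto
  have "bounded_linear F"
    using F(1) abs by (intro bounded_linear_intro[where K = 1]) (auto simp: linear_add linear_scale)
  moreover have "onorm F \<le> 1" by (rule onorm_bound) (use abs in auto)
  ultimately show thesis using that F(2) by (auto simp: dual_def)
qed


lemma exists_dual_infdist:
  fixes X :: "'a::real_normed_vector set"
  assumes X: "subspace X"
  obtains g where "g \<in> dual" "onorm g \<le> 1" "\<And>x. x \<in> X \<Longrightarrow> g x = 0" "g v = infdist v X"
proof (cases "v \<in> X")
  case True
  then show thesis using that[of "\<lambda>_. 0"] by (auto simp: dual_def onorm_zero)
next
  case False
  \<comment> \<open>adjoin v, with value infdist v X, to the zero functional on X\<close>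
  let ?G = "{(y, 0) | y. y \<in> X}"
  have G: "dominated_partial_functional norm ?G ?G"
    unfolding dominated_partial_functional_def using X by (auto intro: subspace_add subspace_scale)
  have "fst ` ?G = X" by force
  have "dominated_partial_functional norm ?G {(d + c *\<^sub>R v, a + c * infdist v X) | d a c. (d, a) \<in> ?G}"
    (is "dominated_partial_functional norm _ ?G'")
  proof (rule dominated_partial_functional_adjoin[OF _ G])
    show "norm (c *\<^sub>R x) = c * norm x" if "c > 0" for c and x :: 'a using that by simp
    show "v \<notin> fst ` ?G" unfolding \<open>fst ` ?G = X\<close> by (rule False)
    show "?G \<noteq> {}" using subspace_0[OF X] by blast
    show "infdist v X \<le> norm (d + v) - a" if "(d, a) \<in> ?G" for d a
      using that infdist_le[of "- d" X v] subspace_neg[OF X] by (auto simp: dist_norm add.commute)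
    show "b - norm (e - v) \<le> infdist v X" if "(e, b) \<in> ?G" for e b
    proof -
      have "b = 0" using that by blast
      moreover have "0 \<le> norm (e - v)" "0 \<le> infdist v X" by (simp_all add: infdist_nonneg)
      ultimately show ?thesis by linarith
    qed
  qed
  then have "dominated_partial_functional norm ?G' ?G'" by (rule dominated_partial_functional_self)
  moreover have "?G' \<noteq> {}" using subspace_0[OF X] by blast
  ultimately obtain F where F: "F \<in> dual" "onorm F \<le> 1" "\<And>x a. (x, a) \<in> ?G' \<Longrightarrow> F x = a"
    by (rule hahn_banach_norm) blast
  show thesis
  proof (rule that[OF F(1,2)])
    show "F x = 0" if "x \<in> X" for x
    proof -
      have "(x + 0 *\<^sub>R v, 0 + 0 * infdist v X) \<in> ?G'" using that by blast
      then show ?thesis using F(3) by simp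
    qed
    have "(v, infdist v X) \<in> ?G'" using subspace_0[OF X] by (intro CollectI exI[of _ 0] exI[of _ 1]) auto
    then show "F v = infdist v X" by (rule F(3))
  qed
qed


lemma exists_norming_functional:
  fixes w :: "'a::real_normed_vector"
  obtains g where "g \<in> dual" "onorm g \<le> 1" "g w = norm w"
  using exists_dual_infdist[OF subspace_single_0, of w] by (auto simp: dist_norm)

lemma dual_linear: "g \<in> dual \<Longrightarrow> linear g"
  by (simp add: dual_def bounded_linear.linear)

lemma dual_abs_le_norm:
  assumes "g \<in> dual" "onorm g \<le> 1"
  shows "\<bar>g x\<bar> \<le> norm x"
proof -
  have "\<bar>g x\<bar> \<le> onorm g * norm x" using onorm[of g x] assms(1) by (simp add: dual_def)
  also have "\<dots> \<le> 1 * norm x" using assms(2) by (intro mult_right_mono) auto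
  finally show ?thesis by simp
qed

lemma dual_separates:
  fixes v w :: "'a::real_normed_vector"
  assumes "\<And>g::'a \<Rightarrow> real. g \<in> dual \<Longrightarrow> g v = g w"
  shows "v = w"
proof -
  obtain g :: "'a \<Rightarrow> real" where g: "g \<in> dual" "g (v - w) = norm (v - w)"
    by (rule exists_norming_functional)
  then show ?thesis using assms[OF g(1)] linear_diff[OF dual_linear[OF g(1)]] by simp
qed

lemma hahn_banach_subspace:
  fixes L :: "'a::real_normed_vector \<Rightarrow> real"
  assumes X: "subspace X"
    and add: "\<And>v w. v \<in> X \<Longrightarrow> w \<in> X \<Longrightarrow> L (v + w) = L v + L w"
    and scale: "\<And>c v. v \<in> X \<Longrightarrow> L (c *\<^sub>R v) = c * L v"
    and le: "\<And>v. v \<in> X \<Longrightarrow> L v \<le> norm v"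
  obtains F where "F \<in> dual" "onorm F \<le> 1" "\<And>v. v \<in> X \<Longrightarrow> F v = L v"
proof -
  let ?G = "{(v, L v) | v. v \<in> X}"
  have "dominated_partial_functional norm ?G ?G"
    unfolding dominated_partial_functional_def
  proof (intro conjI allI impI subset_refl)
    fix v a w b assume "(v, a) \<in> ?G" "(w, b) \<in> ?G"
    then show "(v + w, a + b) \<in> ?G" using X add by (auto intro: subspace_add)
  next
    fix v a c assume "(v, a) \<in> ?G"
    then show "(c *\<^sub>R v, c * a) \<in> ?G" using X scale by (auto intro: subspace_scale)
  qed (use le in auto)
  moreover have "?G \<noteq> {}" using subspace_0[OF X] by blast
  ultimately obtain F where F: "F \<in> dual" "onorm F \<le> 1" "\<And>x a. (x, a) \<in> ?G \<Longrightarrow> F x = a"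
    by (rule hahn_banach_norm) blast
  have "F v = L v" if "v \<in> X" for v using F(3) that by blast
  with F(1,2) show thesis by (rule that)
qed

lemma weak_limit_in_dual:
  fixes g :: "nat \<Rightarrow> 'a::real_normed_vector \<Rightarrow> real"
  assumes g: "\<And>k. g k \<in> dual" "\<And>k. onorm (g k) \<le> 1"
    and X: "subspace X" and conv: "\<And>v. v \<in> X \<Longrightarrow> convergent (\<lambda>i. g i v)"
  obtains F where "F \<in> dual" "\<And>v. v \<in> X \<Longrightarrow> (\<lambda>i. g i v) \<longlonglongrightarrow> F v"
proof -
  define L where "L v = lim (\<lambda>i. g i v)" for v
  have L: "(\<lambda>i. g i v) \<longlonglongrightarrow> L v" if "v \<in> X" for v
    using conv[OF that] unfolding L_def by (simp add: convergent_LIMSEQ_iff)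
  have lin: "linear (g k)" for k using g dual_linear by blast
  obtain F where F: "F \<in> dual" "\<And>v. v \<in> X \<Longrightarrow> F v = L v"
  proof (rule hahn_banach_subspace[OF X])
    fix v w assume vw: "v \<in> X" "w \<in> X"
    have "(\<lambda>i. g i (v + w)) \<longlonglongrightarrow> L v + L w"
      using tendsto_add[OF L[OF vw(1)] L[OF vw(2)]] lin by (simp add: linear_add)
    then show "L (v + w) = L v + L w" using L[of "v + w"] X vw LIMSEQ_unique subspace_add by metis
  next
    fix c v assume v: "v \<in> X"
    have "(\<lambda>i. g i (c *\<^sub>R v)) \<longlonglongrightarrow> c * L v"
      using tendsto_mult[OF tendsto_const[of c] L[OF v]] lin by (simp add: linear_scale)
    then show "L (c *\<^sub>R v) = c * L v" using L[of "c *\<^sub>R v"] X v LIMSEQ_unique subspace_scale by metis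
  next
    fix v assume v: "v \<in> X"
    have "g i v \<le> norm v" for i using dual_abs_le_norm[OF g(1,2), of i v] by simp
    then show "L v \<le> norm v" using Lim_bounded[OF L[OF v], of 0] by auto
  qed blast
  then show thesis using that L by simp
qed

section \<open>Series, blocks and subsequences\<close>

lemma summable_abs_if_summable_indicator:
  fixes c :: "nat \<Rightarrow> real"
  assumes "\<And>A. summable (\<lambda>n. indicator A n * c n)"
  shows "summable (\<lambda>n. \<bar>c n\<bar>)"
proof -
  let ?P = "{n. c n \<ge> 0}"
  have "(\<lambda>n. \<bar>c n\<bar>) = (\<lambda>n. indicator ?P n * c n - indicator (- ?P) n * c n)"
    by (auto simp: fun_eq_iff indicator_def)
  then show ?thesis using summable_diff[OF assms assms] by simp
qed

lemma summable_abs_finite_tail_le: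
  fixes f :: "nat \<Rightarrow> real"
  assumes "summable (\<lambda>j. \<bar>f j\<bar>)" "\<delta> > 0"
  obtains K where "\<And>F. finite F \<Longrightarrow> F \<subseteq> {K..} \<Longrightarrow> (\<Sum>j\<in>F. \<bar>f j\<bar>) \<le> \<delta>"
proof -
  obtain K where K: "\<And>m n. m \<ge> K \<Longrightarrow> norm (\<Sum>j\<in>{m..<n}. \<bar>f j\<bar>) < \<delta>"
    using assms(1)[unfolded summable_Cauchy] assms(2) by blast
  have "(\<Sum>j\<in>F. \<bar>f j\<bar>) \<le> \<delta>" if F: "finite F" "F \<subseteq> {K..}" for F
  proof -
    have "F \<subseteq> {K..<Suc (Max (insert K F))}"
    proof
      fix j assume "j \<in> F"
      then have "j \<le> Max (insert K F)" using F(1) by (intro Max_ge) auto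
      then show "j \<in> {K..<Suc (Max (insert K F))}" using F(2) \<open>j \<in> F\<close> by auto
    qed
    then have "(\<Sum>j\<in>F. \<bar>f j\<bar>) \<le> (\<Sum>j\<in>{K..<Suc (Max (insert K F))}. \<bar>f j\<bar>)"
      by (intro sum_mono2) auto
    also have "\<dots> \<le> \<delta>" using K[of K "Suc (Max (insert K F))"] by simp
    finally show ?thesis .
  qed
  then show thesis by (rule that)
qed

lemma sum_lessThan_diff:
  fixes f :: "nat \<Rightarrow> 'a::ab_group_add"
  assumes "n \<le> m"
  shows "(\<Sum>j<m. f j) - (\<Sum>j<n. f j) = (\<Sum>j\<in>{n..<m}. f j)"
proof -
  have "(\<Sum>j\<in>{0..<n}. f j) + (\<Sum>j\<in>{n..<m}. f j) = (\<Sum>j\<in>{0..<m}. f j)"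
    by (rule sum.atLeastLessThan_concat) (use assms in auto)
  then show ?thesis by (simp add: atLeast0LessThan algebra_simps)
qed

lemma sums_indicator_tail_bound:
  fixes f :: "nat \<Rightarrow> real"
  assumes sums: "(\<lambda>j. indicator A j * f j) sums V"
    and tail: "\<And>F. finite F \<Longrightarrow> F \<subseteq> {B..} \<Longrightarrow> (\<Sum>j\<in>F. \<bar>f j\<bar>) \<le> \<delta>"
  shows "\<bar>V - (\<Sum>j<B. indicator A j * f j)\<bar> \<le> \<delta>"
proof (rule Lim_bounded[of "\<lambda>n. \<bar>(\<Sum>j<n. indicator A j * f j) - (\<Sum>j<B. indicator A j * f j)\<bar>"])
  show "(\<lambda>n. \<bar>(\<Sum>j<n. indicator A j * f j) - (\<Sum>j<B. indicator A j * f j)\<bar>)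
      \<longlonglongrightarrow> \<bar>V - (\<Sum>j<B. indicator A j * f j)\<bar>"
    by (intro tendsto_rabs tendsto_diff tendsto_const) (use sums in \<open>simp add: sums_def\<close>)
  show "\<forall>n\<ge>B. \<bar>(\<Sum>j<n. indicator A j * f j) - (\<Sum>j<B. indicator A j * f j)\<bar> \<le> \<delta>"
  proof (intro allI impI)
    fix n assume "B \<le> n"
    then have "\<bar>(\<Sum>j<n. indicator A j * f j) - (\<Sum>j<B. indicator A j * f j)\<bar>
        = \<bar>\<Sum>j\<in>{B..<n}. indicator A j * f j\<bar>" by (simp only: sum_lessThan_diff)
    also have "\<dots> \<le> (\<Sum>j\<in>{B..<n}. \<bar>f j\<bar>)"
      by (rule order_trans[OF sum_abs sum_mono]) (auto simp: indicator_def)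
    also have "\<dots> \<le> \<delta>" by (rule tail) auto
    finally show "\<bar>(\<Sum>j<n. indicator A j * f j) - (\<Sum>j<B. indicator A j * f j)\<bar> \<le> \<delta>" .
  qed
qed

lemma sum_Union_blocks:
  fixes f :: "nat \<Rightarrow> 'a::comm_monoid_add"
  assumes mono: "incseq Kb" and blocks: "\<And>k. B k \<subseteq> {Kb k..<Kb (Suc k)}"
  shows "(\<Sum>j\<in>(\<Union>k\<in>Q. B k) \<inter> {..<Kb M}. f j) = (\<Sum>k\<in>Q \<inter> {..<M}. \<Sum>j\<in>B k. f j)"
proof -
  have before: "Kb (Suc a) \<le> Kb b" if "a < b" for a b using mono that by (simp add: incseq_def)
  have "(\<Union>k\<in>Q. B k) \<inter> {..<Kb M} = (\<Union>k\<in>Q \<inter> {..<M}. B k)"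
  proof (intro equalityI subsetI)
    fix j assume "j \<in> (\<Union>k\<in>Q. B k) \<inter> {..<Kb M}"
    then obtain k where k: "k \<in> Q" "j \<in> B k" "j < Kb M" by auto
    have "k < M"
    proof (rule ccontr)
      assume "\<not> k < M"
      then have "Kb M \<le> Kb k" using mono by (simp add: incseq_def)
      with k blocks[of k] show False by auto
    qed
    with k show "j \<in> (\<Union>k\<in>Q \<inter> {..<M}. B k)" by auto
  next
    fix j assume "j \<in> (\<Union>k\<in>Q \<inter> {..<M}. B k)"
    then obtain k where k: "k \<in> Q" "k < M" "j \<in> B k" by auto
    with before[of k M] blocks[of k] show "j \<in> (\<Union>k\<in>Q. B k) \<inter> {..<Kb M}" by auto
  qed
  moreover have "finite (B k)" for k using blocks[of k] finite_subset by blast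
  moreover have "B a \<inter> B b = {}" if "a < b" for a b
    using before[OF that] blocks[of a] blocks[of b] by fastforce
  then have "B a \<inter> B b = {}" if "a \<noteq> b" for a b
    using that by (cases a b rule: linorder_cases) blast+
  ultimately show ?thesis by (simp add: sum.UNION_disjoint)
qed

lemma convergent_diagonal_subsequence:
  fixes G :: "nat \<Rightarrow> 'a \<Rightarrow> real" and x :: "nat \<Rightarrow> 'a"
  assumes bound: "\<And>k j. \<bar>G k (x j)\<bar> \<le> M j"
  obtains \<phi> where "strict_mono \<phi>" "\<And>j. convergent (\<lambda>i. G (\<phi> i) (x j))"
proof -
  interpret subseqs "\<lambda>j s. convergent (\<lambda>i. G (s i) (x j))"
  proof
    fix n and s :: "nat \<Rightarrow> nat"
    have "bounded (range (\<lambda>i. G (s i) (x n)))"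
      using bound by (intro boundedI[of _ "M n"]) auto
    from bounded_imp_convergent_subsequence[OF this] obtain l r where
      "strict_mono r" "((\<lambda>i. G (s i) (x n)) \<circ> r) \<longlonglongrightarrow> l" by blast
    then show "\<exists>r'. strict_mono r' \<and> convergent (\<lambda>i. G ((s \<circ> r') i) (x n))"
      by (auto simp: convergent_def o_def)
  qed
  have "convergent (\<lambda>i. G (diagseq i) (x j))" for j
  proof -
    have "convergent (\<lambda>i. G ((diagseq \<circ> (+) (Suc j)) i) (x j))"
    proof (rule diagseq_holds)
      fix r s n assume "strict_mono (r :: nat \<Rightarrow> nat)" "convergent (\<lambda>i. G (s i) (x n))"
      then show "convergent (\<lambda>i. G ((s \<circ> r) i) (x n))"
        using convergent_subseq_convergent[of "\<lambda>i. G (s i) (x n)" r] by (simp add: o_def)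
    qed
    then show ?thesis
      using convergent_ignore_initial_segment[of "\<lambda>i. G (diagseq i) (x j)" "Suc j"]
      by (simp add: o_def add.commute)
  qed
  then show thesis using that subseq_diagseq by blast
qed

lemma subspace_closure:
  fixes S :: "'a::real_normed_vector set"
  assumes "subspace S"
  shows "subspace (closure S)"
  unfolding subspace_def
proof (intro conjI ballI allI)
  show "0 \<in> closure S" using assms closure_subset subspace_0 by blast
next
  fix x y assume "x \<in> closure S" "y \<in> closure S"
  then obtain a b where "\<forall>n. a n \<in> S" "a \<longlonglongrightarrow> x" "\<forall>n. b n \<in> S" "b \<longlonglongrightarrow> y"
    unfolding closure_sequential by blast
  then show "x + y \<in> closure S" unfolding closure_sequential
    by (intro exI[of _ "\<lambda>n. a n + b n"]) (auto intro: tendsto_add subspace_add[OF assms])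
next
  fix c x assume "x \<in> closure S"
  then obtain a where "\<forall>n. a n \<in> S" "a \<longlonglongrightarrow> x" unfolding closure_sequential by blast
  then show "c *\<^sub>R x \<in> closure S" unfolding closure_sequential
    by (intro exI[of _ "\<lambda>n. c *\<^sub>R a n"]) (auto intro: tendsto_scaleR subspace_scale[OF assms])
qed

lemma convergent_on_closure_span:
  fixes g :: "nat \<Rightarrow> 'a::real_normed_vector \<Rightarrow> real"
  assumes g: "\<And>k. g k \<in> dual" "\<And>k. onorm (g k) \<le> 1"
    and conv: "\<And>j. convergent (\<lambda>i. g i (x j))"
    and v: "v \<in> closure (span (range x))"
  shows "convergent (\<lambda>i. g i v)"
proof -
  have lin: "linear (g k)" for k using g dual_linear by blast
  have "subspace {u. convergent (\<lambda>i. g i u)}"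
    unfolding subspace_def
    by (auto simp: lin linear_0 linear_add linear_scale convergent_const
        intro!: convergent_add convergent_mult)
  then have "span (range x) \<subseteq> {u. convergent (\<lambda>i. g i u)}"
    using conv by (intro span_minimal) auto
  then have span_conv: "convergent (\<lambda>i. g i u)" if "u \<in> span (range x)" for u
    using that by blast
  show ?thesis
  proof (rule real_Cauchy_convergent, rule CauchyI)
    fix e :: real assume e: "e > 0"
    from v obtain u where u: "u \<in> span (range x)" "dist u v < e / 3"
      using closure_approachable[of v "span (range x)"] e by (metis divide_pos_pos zero_less_numeral)
    obtain M where M: "\<And>m n. m \<ge> M \<Longrightarrow> n \<ge> M \<Longrightarrow> norm (g m u - g n u) < e / 3"
      using span_conv[OF u(1)] e unfolding Cauchy_convergent_iff[symmetric]
      by (meson CauchyD divide_pos_pos zero_less_numeral)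
    have close: "\<bar>g k a - g k b\<bar> \<le> norm (a - b)" for k a b
      using dual_abs_le_norm[OF g(1,2), of k "a - b"] lin by (simp add: linear_diff)
    have "norm (g m v - g n v) < e" if "m \<ge> M" "n \<ge> M" for m n
    proof -
      have "\<bar>g m v - g n v\<bar> \<le> \<bar>g m v - g m u\<bar> + \<bar>g m u - g n u\<bar> + \<bar>g n u - g n v\<bar>" by linarith
      also have "\<dots> < e / 3 + e / 3 + e / 3"
        using close[of m v u] close[of n u v] M[OF that] u(2) by (simp add: dist_norm norm_minus_commute)
      finally show ?thesis by simp
    qed
    then show "\<exists>M. \<forall>m\<ge>M. \<forall>n\<ge>M. norm (g m v - g n v) < e" by blast
  qed
qed

lemma exists_subset_abs_sum_gt_half:
  fixes g :: "'a \<Rightarrow> real"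
  assumes "finite F" "(\<Sum>j\<in>F. \<bar>g j\<bar>) > e" "e \<ge> 0"
  obtains N where "N \<subseteq> F" "N \<noteq> {}" "\<bar>\<Sum>j\<in>N. g j\<bar> > e / 2"
proof -
  let ?P = "{j\<in>F. g j \<ge> 0}" and ?Q = "{j\<in>F. g j < 0}"
  have "?P \<union> ?Q = F" by auto
  moreover have "(\<Sum>j\<in>?P \<union> ?Q. \<bar>g j\<bar>) = (\<Sum>j\<in>?P. \<bar>g j\<bar>) + (\<Sum>j\<in>?Q. \<bar>g j\<bar>)"
    by (rule sum.union_disjoint) (use assms(1) in auto)
  ultimately have "(\<Sum>j\<in>F. \<bar>g j\<bar>) = (\<Sum>j\<in>?P. \<bar>g j\<bar>) + (\<Sum>j\<in>?Q. \<bar>g j\<bar>)" by simp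
  also have "\<dots> = (\<Sum>j\<in>?P. g j) - (\<Sum>j\<in>?Q. g j)"
    by (simp add: sum_negf[symmetric])
  finally have split: "(\<Sum>j\<in>F. \<bar>g j\<bar>) = (\<Sum>j\<in>?P. g j) - (\<Sum>j\<in>?Q. g j)" .
  have "(\<Sum>j\<in>?P. g j) \<ge> 0" "(\<Sum>j\<in>?Q. g j) \<le> 0" by (auto intro: sum_nonneg sum_nonpos)
  then consider "\<bar>\<Sum>j\<in>?P. g j\<bar> > e / 2" | "\<bar>\<Sum>j\<in>?Q. g j\<bar> > e / 2"
    using split assms(2) by linarith
  then show thesis
  proof cases
    case 1
    have "?P \<noteq> {}"
    proof
      assume "?P = {}"
      with 1 assms(3) show False by simp
    qed
    then show thesis using that[of ?P] 1 by blast
  next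
    case 2
    have "?Q \<noteq> {}"
    proof
      assume "?Q = {}"
      with 2 assms(3) show False by simp
    qed
    then show thesis using that[of ?Q] 2 by blast
  qed
qed

lemma eventually_chain_subseq:
  assumes "\<And>p. eventually (P p) sequentially"
  obtains r :: "nat \<Rightarrow> nat" where "strict_mono r" "\<And>s. P (r s) (r (Suc s))"
proof -
  have "\<exists>i. p < i \<and> P p i" for p
  proof -
    obtain N where "\<And>i. i \<ge> N \<Longrightarrow> P p i" using assms[of p] by (auto simp: eventually_sequentially)
    then show ?thesis by (intro exI[of _ "max (Suc p) N"]) auto
  qed
  then obtain nxt where nxt: "\<And>p. p < nxt p \<and> P p (nxt p)" by metis
  define r where "r = rec_nat (nxt 0) (\<lambda>_ p. nxt p)"
  have "r (Suc s) = nxt (r s)" for s by (simp add: r_def)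
  then show thesis using that[of r] nxt by (simp add: strict_mono_Suc_iff)
qed

lemma sums_blocks_approx:
  fixes f :: "nat \<Rightarrow> real"
  assumes sums: "(\<lambda>j. indicator (\<Union>l\<in>Q. B l) j * f j) sums V"
    and Kb: "incseq Kb" and B: "\<And>l. B l \<subseteq> {Kb l..<Kb (Suc l)}"
    and tail: "\<And>F. finite F \<Longrightarrow> F \<subseteq> {Kb M..} \<Longrightarrow> (\<Sum>j\<in>F. \<bar>f j\<bar>) \<le> \<delta>"
  shows "\<bar>V - (\<Sum>l\<in>Q \<inter> {..<M}. \<Sum>j\<in>B l. f j)\<bar> \<le> \<delta>"
proof -
  have "(\<Sum>j<Kb M. indicator (\<Union>l\<in>Q. B l) j * f j) = (\<Sum>j\<in>(\<Union>l\<in>Q. B l) \<inter> {..<Kb M}. f j)"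
    by (simp add: sum.inter_restrict Int_commute indicator_def if_distrib)
  also have "\<dots> = (\<Sum>l\<in>Q \<inter> {..<M}. \<Sum>j\<in>B l. f j)" by (rule sum_Union_blocks[OF Kb B])
  finally show ?thesis using sums_indicator_tail_bound[OF sums, of "Kb M", OF tail] by simp
qed


section \<open>The Orlicz-Pettis theorem\<close>

definition weakly_subseries_summable :: "(nat \<Rightarrow> 'a::real_normed_vector) \<Rightarrow> bool" where
  "weakly_subseries_summable x \<longleftrightarrow> (\<forall>A. \<exists>v. \<forall>g\<in>dual. (\<lambda>j. indicator A j * g (x j)) sums g v)"

lemma weakly_subseries_summable_abs:
  assumes x: "weakly_subseries_summable x" and g: "g \<in> dual"
  shows "summable (\<lambda>j. \<bar>g (x j)\<bar>)"
proof (rule summable_abs_if_summable_indicator)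
  fix A
  obtain v where "\<forall>g\<in>dual. (\<lambda>j. indicator A j * g (x j)) sums g v"
    using x unfolding weakly_subseries_summable_def by blast
  then show "summable (\<lambda>j. indicator A j * g (x j))" using g sums_summable by blast
qed

lemma weak_sum_in_closure_span:
  fixes x :: "nat \<Rightarrow> 'a::real_normed_vector"
  assumes sums: "\<And>g. g \<in> dual \<Longrightarrow> (\<lambda>j. indicator A j * g (x j)) sums g v"
  shows "v \<in> closure (span (range x))"
proof (rule ccontr)
  let ?X = "closure (span (range x))"
  assume v: "v \<notin> ?X"
  have X: "subspace ?X" by (intro subspace_closure subspace_span)
  obtain g where g: "g \<in> dual" "\<And>y. y \<in> ?X \<Longrightarrow> g y = 0" "g v = infdist v ?X"
    using exists_dual_infdist[OF X, of v] by blast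
  have "?X \<noteq> {}" using subspace_0[OF X] by (metis empty_iff)
  then have "g v > 0" unfolding g(3) by (rule infdist_pos_not_in_closed[OF closed_closure _ v])
  moreover have "g (x j) = 0" for j
  proof -
    have "x j \<in> span (range x)" by (rule span_base) simp
    then show ?thesis using g(2) closure_subset by blast
  qed
  then have "(\<lambda>j. 0) sums g v" using sums[OF g(1)] by simp
  then have "g v = 0" using sums_unique2[OF _ sums_zero] by blast
  ultimately show False by simp
qed

lemma gliding_hump_blocks:
  fixes x :: "nat \<Rightarrow> 'a::real_normed_vector"
  assumes bad: "\<And>K. \<exists>g F. g \<in> dual \<and> onorm g \<le> 1 \<and> finite F \<and> F \<subseteq> {K..} \<and> (\<Sum>j\<in>F. \<bar>g (x j)\<bar>) > \<epsilon>"
    and \<epsilon>: "\<epsilon> \<ge> 0"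
  obtains Kb B G where "strict_mono Kb" "\<And>k. B k \<subseteq> {Kb k..<Kb (Suc k)}"
    "\<And>k. G k \<in> dual" "\<And>k. onorm (G k) \<le> 1" "\<And>k. \<bar>\<Sum>j\<in>B k. G k (x j)\<bar> > \<epsilon> / 2"
proof -
  have "\<exists>g N. g \<in> dual \<and> onorm g \<le> 1 \<and> finite N \<and> N \<subseteq> {K..} \<and> N \<noteq> {} \<and>
      \<bar>\<Sum>j\<in>N. g (x j)\<bar> > \<epsilon> / 2" for K
  proof -
    obtain g F where gF: "g \<in> dual" "onorm g \<le> 1" "finite F" "F \<subseteq> {K..}"
      "(\<Sum>j\<in>F. \<bar>g (x j)\<bar>) > \<epsilon>" using bad[of K] by blast
    obtain N where "N \<subseteq> F" "N \<noteq> {}" "\<bar>\<Sum>j\<in>N. g (x j)\<bar> > \<epsilon> / 2"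
      using exists_subset_abs_sum_gt_half[OF gF(3,5) \<epsilon>] .
    moreover have "finite N" using \<open>N \<subseteq> F\<close> gF(3) finite_subset by blast
    ultimately show ?thesis using gF by blast
  qed
  then obtain g N where gN: "\<And>K. g K \<in> dual \<and> onorm (g K) \<le> 1 \<and> finite (N K) \<and> N K \<subseteq> {K..} \<and>
      N K \<noteq> {} \<and> \<bar>\<Sum>j\<in>N K. g K (x j)\<bar> > \<epsilon> / 2" by metis
  define Kb where "Kb = rec_nat 0 (\<lambda>_ K. Suc (Max (N K)))"
  have KbS: "Kb (Suc k) = Suc (Max (N (Kb k)))" for k by (simp add: Kb_def)
  have blocks: "N (Kb k) \<subseteq> {Kb k..<Kb (Suc k)}" for k
  proof
    fix j assume j: "j \<in> N (Kb k)"
    have "j \<le> Max (N (Kb k))" using gN j by (intro Max_ge) auto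
    then have "j < Kb (Suc k)" by (simp add: KbS)
    moreover have "Kb k \<le> j" using j gN[of "Kb k"] by auto
    ultimately show "j \<in> {Kb k..<Kb (Suc k)}" by simp
  qed
  have "strict_mono Kb"
    unfolding strict_mono_Suc_iff
  proof
    fix k
    obtain j where "j \<in> N (Kb k)" using gN by blast
    then show "Kb k < Kb (Suc k)" using blocks[of k] by auto
  qed
  then show thesis using that[of Kb "\<lambda>k. N (Kb k)" "\<lambda>k. g (Kb k)"] blocks gN by blast
qed

lemma dual_ball_subsequence_converges:
  fixes G :: "nat \<Rightarrow> 'a::real_normed_vector \<Rightarrow> real" and x :: "nat \<Rightarrow> 'a"
  assumes G: "\<And>k. G k \<in> dual" "\<And>k. onorm (G k) \<le> 1"
  obtains \<phi> H where "strict_mono \<phi>" "H \<in> dual"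
    "\<And>v. v \<in> closure (span (range x)) \<Longrightarrow> (\<lambda>i. G (\<phi> i) v) \<longlonglongrightarrow> H v"
proof -
  obtain \<phi> where \<phi>: "strict_mono \<phi>" "\<And>j. convergent (\<lambda>i. G (\<phi> i) (x j))"
    using convergent_diagonal_subsequence[of G x "\<lambda>j. norm (x j)"] dual_abs_le_norm[OF G] by blast
  have X: "subspace (closure (span (range x)))" by (intro subspace_closure subspace_span)
  have "convergent (\<lambda>i. G (\<phi> i) v)" if "v \<in> closure (span (range x))" for v
    using convergent_on_closure_span[of "\<lambda>i. G (\<phi> i)" x v] G \<phi>(2) that by blast
  with weak_limit_in_dual[of "\<lambda>i. G (\<phi> i)", OF G X] obtain H where
    "H \<in> dual" "\<And>v. v \<in> closure (span (range x)) \<Longrightarrow> (\<lambda>i. G (\<phi> i) v) \<longlonglongrightarrow> H v"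
    by blast
  then show thesis using that \<phi>(1) by blast
qed

lemma gliding_hump_contradiction:
  fixes val c :: "nat \<Rightarrow> real" and m :: "nat \<Rightarrow> nat \<Rightarrow> real"
  defines "Ev \<equiv> {l::nat. even l}"
  assumes conv: "convergent val" and \<delta>: "\<delta> > 0"
    and val: "\<And>s. \<bar>val s - (\<Sum>l\<in>Ev \<inter> {..<Suc s}. m s l)\<bar> \<le> \<delta>"
    and rows: "\<And>q n. n \<le> Suc q \<Longrightarrow> \<bar>(\<Sum>l\<in>Ev \<inter> {..<n}. m (Suc q) l) - (\<Sum>l\<in>Ev \<inter> {..<n}. c l)\<bar> \<le> \<delta>"
    and diag: "\<And>s. 6 * \<delta> < \<bar>m s s\<bar>"
    and c: "\<And>s. \<bar>c (Suc s)\<bar> \<le> \<delta>"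
  shows False
proof -
  \<comment> \<open>up to 5\<delta>, val s exceeds val (Suc s) by the diagonal entry m s s for even s\<close>
  obtain S0 where S0: "\<And>s. s \<ge> S0 \<Longrightarrow> \<bar>val s - val (Suc s)\<bar> < \<delta>"
    using CauchyD[OF conv[folded Cauchy_convergent_iff] \<delta>] by (metis le_Suc_eq real_norm_def)
  define s where "s = Suc (Suc (2 * S0))"
  have "even s" "s \<ge> S0" by (auto simp: s_def)
  then have insert_s: "Ev \<inter> {..<Suc s} = insert s (Ev \<inter> {..<s})"
    and skip_odd: "Ev \<inter> {..<Suc (Suc s)} = Ev \<inter> {..<Suc s}"
    by (auto simp: Ev_def less_Suc_eq)
  have "(\<Sum>l\<in>Ev \<inter> {..<Suc s}. m s l) = m s s + (\<Sum>l\<in>Ev \<inter> {..<s}. m s l)"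
    "(\<Sum>l\<in>Ev \<inter> {..<Suc s}. c l) = c s + (\<Sum>l\<in>Ev \<inter> {..<s}. c l)"
    unfolding insert_s by simp_all
  moreover have "\<bar>(\<Sum>l\<in>Ev \<inter> {..<s}. m s l) - (\<Sum>l\<in>Ev \<inter> {..<s}. c l)\<bar> \<le> \<delta>"
    using rows[where q = "Suc (2 * S0)" and n = s] by (simp add: s_def)
  moreover have "\<bar>val (Suc s) - (\<Sum>l\<in>Ev \<inter> {..<Suc s}. m (Suc s) l)\<bar> \<le> \<delta>"
    using val[of "Suc s"] unfolding skip_odd .
  moreover have "\<bar>c s\<bar> \<le> \<delta>" using c[of "Suc (2 * S0)"] by (simp add: s_def)
  ultimately show False
    using val[of s] rows[where q = s and n = "Suc s"] diag[of s] S0[OF \<open>s \<ge> S0\<close>] by linarith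
qed

lemma gliding_hump_indices:
  fixes m :: "nat \<Rightarrow> nat \<Rightarrow> real" and c :: "nat \<Rightarrow> real" and L :: "nat \<Rightarrow> nat"
  assumes c: "c \<longlonglongrightarrow> 0" and columns: "\<And>k. (\<lambda>i. m i k) \<longlonglongrightarrow> c k" and \<delta>: "\<delta> > 0"
  obtains r where "strict_mono r" "\<And>s. \<bar>c (r (Suc s))\<bar> \<le> \<delta>"
    "\<And>s k. k \<le> r s \<Longrightarrow> \<bar>m (r (Suc s)) k - c k\<bar> \<le> \<delta> / (r s + 1)" "\<And>s. L (r s) \<le> r (Suc s)"
proof -
  define P where "P p i \<longleftrightarrow> \<bar>c i\<bar> \<le> \<delta> \<and> (\<forall>k\<le>p. \<bar>m i k - c k\<bar> \<le> \<delta> / (p + 1)) \<and> L p \<le> i"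
    for p i
  have "eventually (P p) sequentially" for p
  proof -
    have "eventually (\<lambda>i. dist (c i) 0 < \<delta>) sequentially" using c \<delta> by (simp add: tendsto_iff)
    then have "eventually (\<lambda>i. \<bar>c i\<bar> \<le> \<delta>) sequentially" by (rule eventually_mono) simp
    moreover have "eventually (\<lambda>i. \<forall>k\<in>{..p}. \<bar>m i k - c k\<bar> \<le> \<delta> / (p + 1)) sequentially"
    proof (rule eventually_ball_finite)
      show "\<forall>k\<in>{..p}. eventually (\<lambda>i. \<bar>m i k - c k\<bar> \<le> \<delta> / (p + 1)) sequentially"
      proof
        fix k
        have "eventually (\<lambda>i. dist (m i k) (c k) < \<delta> / (p + 1)) sequentially"
          using columns[of k] \<delta> by (simp add: tendsto_iff)
        then show "eventually (\<lambda>i. \<bar>m i k - c k\<bar> \<le> \<delta> / (p + 1)) sequentially"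
          by (rule eventually_mono) (simp add: dist_real_def)
      qed
    qed simp
    then have "eventually (\<lambda>i. \<forall>k\<le>p. \<bar>m i k - c k\<bar> \<le> \<delta> / (p + 1)) sequentially"
      by (rule eventually_mono) auto
    ultimately show ?thesis
      unfolding P_def by (intro eventually_conj eventually_ge_at_top) auto
  qed
  then obtain r where r: "strict_mono r" "\<And>s. P (r s) (r (Suc s))"
    by (rule eventually_chain_subseq[of P]) blast
  show thesis
  proof (rule that[OF r(1)])
    show "\<bar>c (r (Suc s))\<bar> \<le> \<delta>" for s using r(2)[of s] unfolding P_def by blast
    show "\<bar>m (r (Suc s)) k - c k\<bar> \<le> \<delta> / (r s + 1)" if "k \<le> r s" for s k
      using r(2)[of s] that unfolding P_def by simp
    show "L (r s) \<le> r (Suc s)" for s using r(2)[of s] unfolding P_def by blast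
  qed
qed

lemma weakly_subseries_summable_no_gliding_hump:
  fixes x :: "nat \<Rightarrow> 'a::real_normed_vector"
  assumes x: "weakly_subseries_summable x" and \<epsilon>: "\<epsilon> > 0"
    and Kb: "strict_mono Kb" and B: "\<And>k. B k \<subseteq> {Kb k..<Kb (Suc k)}"
    and G: "\<And>k. G k \<in> dual" "\<And>k. onorm (G k) \<le> 1"
  shows "\<exists>k. \<bar>\<Sum>j\<in>B k. G k (x j)\<bar> \<le> \<epsilon>"
proof (rule ccontr)
  assume "\<not> ?thesis"
  then have hump: "\<epsilon> < \<bar>\<Sum>j\<in>B k. G k (x j)\<bar>" for k by (simp add: not_le)
  let ?X = "closure (span (range x))"
  define \<delta> where "\<delta> = \<epsilon> / 10"
  have \<delta>: "\<delta> > 0" using \<epsilon> by (simp add: \<delta>_def)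
  have tail_le: "\<exists>K. \<forall>F. finite F \<longrightarrow> F \<subseteq> {K..} \<longrightarrow> (\<Sum>j\<in>F. \<bar>g (x j)\<bar>) \<le> d"
    if g: "g \<in> dual" and d: "d > 0" for g d
  proof -
    obtain K where "\<And>F. finite F \<Longrightarrow> F \<subseteq> {K..} \<Longrightarrow> (\<Sum>j\<in>F. \<bar>g (x j)\<bar>) \<le> d"
      by (rule summable_abs_finite_tail_le[OF weakly_subseries_summable_abs[OF x g] d]) blast
    then show ?thesis by blast
  qed
  define z where "z k = (\<Sum>j\<in>B k. x j)" for k
  have Gz: "g (z k) = (\<Sum>j\<in>B k. g (x j))" if "g \<in> dual" for g k
    unfolding z_def using dual_linear[OF that] by (simp add: linear_sum)
  have zX: "z k \<in> ?X" for k
  proof -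
    have "z k \<in> span (range x)" unfolding z_def by (intro span_sum span_base) simp
    then show ?thesis by (rule subsetD[OF closure_subset])
  qed
  obtain \<phi> H where \<phi>: "strict_mono \<phi>" and H: "H \<in> dual" "\<And>v. v \<in> ?X \<Longrightarrow> (\<lambda>i. G (\<phi> i) v) \<longlonglongrightarrow> H v"
    by (rule dual_ball_subsequence_converges[of G x, OF G]) blast
  have below_Kb: "k \<le> Kb (\<phi> k)" for k
    using seq_suble[OF \<phi>, of k] seq_suble[OF Kb, of "\<phi> k"] by linarith
  \<comment> \<open>rows: the functionals along the subsequence, columns: the blocks along it\<close>
  define m where "m i k = G (\<phi> i) (z (\<phi> k))" for i k
  define c where "c k = H (z (\<phi> k))" for k
  have c_lim: "c \<longlonglongrightarrow> 0"
  proof (rule LIMSEQ_I)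
    fix d :: real assume "d > 0"
    then obtain K where K: "\<forall>F. finite F \<longrightarrow> F \<subseteq> {K..} \<longrightarrow> (\<Sum>j\<in>F. \<bar>H (x j)\<bar>) \<le> d / 2"
      using tail_le[OF H(1), of "d / 2"] by auto
    have "norm (c k - 0) < d" if "k \<ge> K" for k
    proof -
      have "B (\<phi> k) \<subseteq> {K..}" using B[of "\<phi> k"] below_Kb[of k] that by auto
      moreover have "finite (B (\<phi> k))" using B[of "\<phi> k"] finite_subset by blast
      ultimately have "(\<Sum>j\<in>B (\<phi> k). \<bar>H (x j)\<bar>) \<le> d / 2" using K by blast
      moreover have "\<bar>c k\<bar> \<le> (\<Sum>j\<in>B (\<phi> k). \<bar>H (x j)\<bar>)" unfolding c_def Gz[OF H(1)] by (rule sum_abs)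
      ultimately show ?thesis using \<open>d > 0\<close> by simp
    qed
    then show "\<exists>K. \<forall>k\<ge>K. norm (c k - 0) < d" by blast
  qed
  have columns: "(\<lambda>i. m i k) \<longlonglongrightarrow> c k" for k unfolding m_def c_def by (rule H(2)[OF zX])
  obtain L where L: "\<And>p F. finite F \<Longrightarrow> F \<subseteq> {L p..} \<Longrightarrow> (\<Sum>j\<in>F. \<bar>G (\<phi> p) (x j)\<bar>) \<le> \<delta>"
    using tail_le[OF G(1) \<delta>] by metis
  obtain r where r: "strict_mono r" "\<And>s. \<bar>c (r (Suc s))\<bar> \<le> \<delta>"
    "\<And>s k. k \<le> r s \<Longrightarrow> \<bar>m (r (Suc s)) k - c k\<bar> \<le> \<delta> / (r s + 1)" "\<And>s. L (r s) \<le> r (Suc s)"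
    by (rule gliding_hump_indices[of c m \<delta> L, OF c_lim columns \<delta>]) blast
  \<comment> \<open>the subseries over every other selected block\<close>
  define Ev where "Ev = {l::nat. even l}"
  define A where "A = (\<Union>l\<in>Ev. B (\<phi> (r l)))"
  obtain vA where vA: "\<And>g. g \<in> dual \<Longrightarrow> (\<lambda>j. indicator A j * g (x j)) sums g vA"
    using x unfolding weakly_subseries_summable_def by blast
  define val where "val s = G (\<phi> (r s)) vA" for s
  have "convergent val"
  proof -
    have "(\<lambda>i. G (\<phi> i) vA) \<longlonglongrightarrow> H vA" by (rule H(2)[OF weak_sum_in_closure_span[OF vA]])
    from LIMSEQ_subseq_LIMSEQ[OF this r(1)] show ?thesis
      unfolding val_def convergent_def o_def by blast
  qed
  moreover have "\<bar>val s - (\<Sum>l\<in>Ev \<inter> {..<Suc s}. m (r s) (r l))\<bar> \<le> \<delta>" for s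
  proof -
    have mono: "strict_mono (\<lambda>l. Kb (\<phi> (r l)))" using Kb \<phi> r(1) by (simp add: strict_mono_def)
    have "B (\<phi> (r l)) \<subseteq> {Kb (\<phi> (r l))..<Kb (\<phi> (r (Suc l)))}" for l
    proof -
      have "\<phi> (r l) < \<phi> (r (Suc l))" using \<phi> r(1) by (simp add: strict_mono_def)
      then have "Kb (Suc (\<phi> (r l))) \<le> Kb (\<phi> (r (Suc l)))" using Kb by (simp add: strict_mono_less_eq)
      then show ?thesis using B[of "\<phi> (r l)"] by auto
    qed
    moreover have "(\<Sum>j\<in>F. \<bar>G (\<phi> (r s)) (x j)\<bar>) \<le> \<delta>"
      if "finite F" "F \<subseteq> {Kb (\<phi> (r (Suc s)))..}" for F
      using that r(4)[of s] below_Kb[of "r (Suc s)"] by (intro L) auto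
    ultimately show ?thesis
      using sums_blocks_approx[OF vA[OF G(1), unfolded A_def] strict_mono_mono[OF mono]]
      unfolding val_def m_def Gz[OF G(1)] by blast
  qed
  moreover have "\<bar>(\<Sum>l\<in>Ev \<inter> {..<n}. m (r (Suc q)) (r l)) - (\<Sum>l\<in>Ev \<inter> {..<n}. c (r l))\<bar> \<le> \<delta>"
    if "n \<le> Suc q" for q n
  proof -
    have "\<bar>m (r (Suc q)) (r l) - c (r l)\<bar> \<le> \<delta> / (r q + 1)" if "l \<in> Ev \<inter> {..<n}" for l
      using r(3) \<open>n \<le> Suc q\<close> that r(1) by (auto simp: strict_mono_less_eq)
    then have "\<bar>(\<Sum>l\<in>Ev \<inter> {..<n}. m (r (Suc q)) (r l)) - (\<Sum>l\<in>Ev \<inter> {..<n}. c (r l))\<bar>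
        \<le> card (Ev \<inter> {..<n}) * (\<delta> / (r q + 1))"
      unfolding sum_subtractf[symmetric] by (intro order_trans[OF sum_abs sum_bounded_above]) auto
    also have "\<dots> \<le> (r q + 1) * (\<delta> / (r q + 1))"
    proof -
      have "card (Ev \<inter> {..<n}) \<le> card {..<n}" by (intro card_mono) auto
      then have "card (Ev \<inter> {..<n}) \<le> r q + 1" using that seq_suble[OF r(1), of q] by simp
      then show ?thesis using \<delta> by (intro mult_right_mono) auto
    qed
    finally show ?thesis by simp
  qed
  moreover have "6 * \<delta> < \<bar>m (r s) (r s)\<bar>" for s
    using hump[of "\<phi> (r s)"] Gz[OF G(1)] \<delta> unfolding m_def \<delta>_def by simp
  ultimately show False
    by (intro gliding_hump_contradiction[of val \<delta> "\<lambda>s l. m (r s) (r l)" "\<lambda>l. c (r l)", folded Ev_def]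
        \<delta> r(2))
qed

theorem orlicz_pettis_uniform_tail:
  fixes x :: "nat \<Rightarrow> 'a::real_normed_vector"
  assumes x: "weakly_subseries_summable x" and \<epsilon>: "\<epsilon> > 0"
  obtains K where
    "\<And>g F. g \<in> dual \<Longrightarrow> onorm g \<le> 1 \<Longrightarrow> finite F \<Longrightarrow> F \<subseteq> {K..} \<Longrightarrow> (\<Sum>j\<in>F. \<bar>g (x j)\<bar>) \<le> \<epsilon>"
proof (rule ccontr)
  assume no_K: "\<not> thesis"
  have "\<exists>g F. g \<in> dual \<and> onorm g \<le> 1 \<and> finite F \<and> F \<subseteq> {K..} \<and> (\<Sum>j\<in>F. \<bar>g (x j)\<bar>) > \<epsilon>" for K
  proof (rule ccontr)
    assume "\<not> ?thesis"
    then have "(\<Sum>j\<in>F. \<bar>g (x j)\<bar>) \<le> \<epsilon>"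
      if "g \<in> dual" "onorm g \<le> 1" "finite F" "F \<subseteq> {K..}" for g F
      using that by (meson not_le)
    then show False using no_K that by blast
  qed
  then obtain Kb B G where "strict_mono Kb" "\<And>k. B k \<subseteq> {Kb k..<Kb (Suc k)}"
    "\<And>k. G k \<in> dual" "\<And>k. onorm (G k) \<le> 1" "\<And>k. \<bar>\<Sum>j\<in>B k. G k (x j)\<bar> > \<epsilon> / 2"
    by (rule gliding_hump_blocks) (use \<epsilon> in auto)
  moreover note weakly_subseries_summable_no_gliding_hump[OF x, of "\<epsilon> / 2" Kb B G]
  ultimately show False using \<epsilon> by (auto simp: not_le[symmetric])
qed

section \<open>Integration with respect to m_T\<close>

definition partial_integral ::
    "((nat \<Rightarrow> real) \<Rightarrow> 'e::real_normed_vector) \<Rightarrow> (nat \<Rightarrow> real) \<Rightarrow> nat set \<Rightarrow> nat \<Rightarrow> 'e" where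
  "partial_integral T y A K = (\<Sum>n<K. (indicator A n * y n) *\<^sub>R T (unitvec n))"

lemma var_meas_integrable:
  "integrable (var_meas T g) y \<longleftrightarrow> summable (\<lambda>n. \<bar>g (T (unitvec n))\<bar> * \<bar>y n\<bar>)"
  unfolding var_meas_def
  by (subst integrable_density) (auto simp: integrable_count_space_nat_iff abs_mult)

lemma var_meas_integral:
  assumes "summable (\<lambda>n. \<bar>g (T (unitvec n))\<bar> * \<bar>y n\<bar>)"
  shows "integral\<^sup>L (var_meas T g) y = (\<Sum>n. \<bar>g (T (unitvec n))\<bar> * y n)"
proof -
  have "integrable (count_space UNIV) (\<lambda>n. \<bar>g (T (unitvec n))\<bar> *\<^sub>R y n)"
    using assms by (simp add: integrable_count_space_nat_iff abs_mult)
  then show ?thesis unfolding var_meas_def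
    by (subst integral_density) (auto simp: integral_count_space_nat)
qed

lemma scal_int_sums:
  assumes "summable (\<lambda>n. \<bar>g (T (unitvec n))\<bar> * \<bar>y n\<bar>)"
  shows "(\<lambda>n. indicator A n * y n * g (T (unitvec n))) sums scal_int T g A y"
proof -
  have "summable (\<lambda>n. norm (indicator A n * y n * g (T (unitvec n))))"
    by (rule summable_comparison_test'[OF assms, of 0]) (auto simp: indicator_def abs_mult)
  then have "integrable (count_space UNIV) (\<lambda>n. indicator A n * y n * g (T (unitvec n)))"
    by (simp add: integrable_count_space_nat_iff)
  from sums_integral_count_space_nat[OF this] show ?thesis unfolding scal_int_def .
qed

lemma l1m_iff_weak_sums:
  fixes T :: "(nat \<Rightarrow> real) \<Rightarrow> 'e::real_normed_vector"
  shows "y \<in> l1m T \<longleftrightarrow> (\<forall>g\<in>dual. summable (\<lambda>n. \<bar>g (T (unitvec n))\<bar> * \<bar>y n\<bar>)) \<and>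
     (\<forall>A. \<exists>v. \<forall>g\<in>dual. (\<lambda>n. indicator A n * y n * g (T (unitvec n))) sums g v)"
    (is "_ \<longleftrightarrow> ?summable \<and> ?sums")
proof
  assume y: "y \<in> l1m T"
  then have s: ?summable unfolding l1m_def by (simp add: var_meas_integrable)
  moreover have "\<exists>v. \<forall>g\<in>dual. (\<lambda>n. indicator A n * y n * g (T (unitvec n))) sums g v" for A
  proof -
    obtain v where v: "\<forall>f\<in>dual. f v = scal_int T f A y" using y unfolding l1m_def by blast
    have "(\<lambda>n. indicator A n * y n * g (T (unitvec n))) sums g v" if "g \<in> dual" for g
      using scal_int_sums[of g T y A] s v that by simp
    then show ?thesis by blast
  qed
  ultimately show "?summable \<and> ?sums" by blast
next
  assume h: "?summable \<and> ?sums"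
  have "\<exists>v. \<forall>f\<in>dual. f v = scal_int T f A y" for A
  proof -
    obtain v where v: "\<forall>g\<in>dual. (\<lambda>n. indicator A n * y n * g (T (unitvec n))) sums g v"
      using h by blast
    have "f v = scal_int T f A y" if "f \<in> dual" for f
      using sums_unique2[OF v[rule_format, OF that] scal_int_sums[of f T y A]] h that by blast
    then show ?thesis by blast
  qed
  then show "y \<in> l1m T" using h unfolding l1m_def by (simp add: var_meas_integrable)
qed

lemma l1m_summable:
  fixes T :: "(nat \<Rightarrow> real) \<Rightarrow> 'e::real_normed_vector"
  shows "y \<in> l1m T \<Longrightarrow> g \<in> dual \<Longrightarrow> summable (\<lambda>n. \<bar>g (T (unitvec n))\<bar> * \<bar>y n\<bar>)"
  using l1m_iff_weak_sums by blast

lemma weak_sums_if_partial_integral_tendsto: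
  fixes T :: "(nat \<Rightarrow> real) \<Rightarrow> 'e::real_normed_vector"
  assumes "partial_integral T y A \<longlonglongrightarrow> v" "g \<in> dual"
  shows "(\<lambda>n. indicator A n * y n * g (T (unitvec n))) sums g v"
proof -
  have bl: "bounded_linear g" using assms(2) by (simp add: dual_def)
  have "g (partial_integral T y A K) = (\<Sum>n<K. indicator A n * y n * g (T (unitvec n)))" for K
    unfolding partial_integral_def using bounded_linear.linear[OF bl]
    by (simp add: linear_sum linear_scale)
  then show ?thesis
    using bounded_linear.tendsto[OF bl assms(1)] unfolding sums_def by simp
qed

lemma l1m_if_partial_integral_convergent:
  fixes T :: "(nat \<Rightarrow> real) \<Rightarrow> 'e::real_normed_vector"
  assumes "\<And>A. \<exists>v. partial_integral T y A \<longlonglongrightarrow> v"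
  shows "y \<in> l1m T"
  unfolding l1m_iff_weak_sums
proof (intro conjI ballI allI)
  fix A
  show "\<exists>v. \<forall>g\<in>dual. (\<lambda>n. indicator A n * y n * g (T (unitvec n))) sums g v"
    using assms[of A] weak_sums_if_partial_integral_tendsto by blast
next
  fix g :: "'e \<Rightarrow> real" assume g: "g \<in> dual"
  have "summable (\<lambda>n. indicator A n * (y n * g (T (unitvec n))))" for A
  proof -
    obtain v where "partial_integral T y A \<longlonglongrightarrow> v" using assms by blast
    from weak_sums_if_partial_integral_tendsto[OF this g] show ?thesis
      by (simp add: sums_summable mult.assoc)
  qed
  then have "summable (\<lambda>n. \<bar>y n * g (T (unitvec n))\<bar>)" by (rule summable_abs_if_summable_indicator)
  then show "summable (\<lambda>n. \<bar>g (T (unitvec n))\<bar> * \<bar>y n\<bar>)" by (simp add: abs_mult mult.commute)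
qed

lemma vec_int_eqI:
  fixes T :: "(nat \<Rightarrow> real) \<Rightarrow> 'e::real_normed_vector"
  assumes y: "y \<in> l1m T"
    and v: "\<And>g. g \<in> dual \<Longrightarrow> (\<lambda>n. indicator A n * y n * g (T (unitvec n))) sums g v"
  shows "vec_int T A y = v"
proof (rule dual_separates)
  have v_int: "\<forall>f\<in>dual. f v = scal_int T f A y"
  proof
    fix f :: "'e \<Rightarrow> real" assume f: "f \<in> dual"
    show "f v = scal_int T f A y" using sums_unique2[OF v[OF f] scal_int_sums[of f T y A, OF l1m_summable[OF y f]]] .
  qed
  then have "\<forall>f\<in>dual. f (vec_int T A y) = scal_int T f A y"
    unfolding vec_int_def by (rule someI)
  with v_int show "g (vec_int T A y) = g v" if "g \<in> dual" for g using that by metis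
qed

lemma vec_int_sums:
  fixes T :: "(nat \<Rightarrow> real) \<Rightarrow> 'e::real_normed_vector"
  assumes y: "y \<in> l1m T" and g: "g \<in> dual"
  shows "(\<lambda>n. indicator A n * y n * g (T (unitvec n))) sums g (vec_int T A y)"
proof -
  obtain v where v: "\<forall>g\<in>dual. (\<lambda>n. indicator A n * y n * g (T (unitvec n))) sums g v"
    using y l1m_iff_weak_sums by blast
  have "vec_int T A y = v" by (rule vec_int_eqI[OF y]) (use v in blast)
  then show ?thesis using v g by simp
qed

lemma vec_int_eq_lim:
  fixes T :: "(nat \<Rightarrow> real) \<Rightarrow> 'e::real_normed_vector"
  assumes "partial_integral T y A \<longlonglongrightarrow> v" "y \<in> l1m T"
  shows "vec_int T A y = v"
  using vec_int_eqI[OF assms(2)] weak_sums_if_partial_integral_tendsto[OF assms(1)] by blast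

lemma l1m_weakly_subseries_summable:
  fixes T :: "(nat \<Rightarrow> real) \<Rightarrow> 'e::real_normed_vector"
  assumes y: "y \<in> l1m T"
  shows "weakly_subseries_summable (\<lambda>j. y j *\<^sub>R T (unitvec j))"
  unfolding weakly_subseries_summable_def
proof
  fix A
  obtain v where "\<forall>g\<in>dual. (\<lambda>n. indicator A n * y n * g (T (unitvec n))) sums g v"
    using y l1m_iff_weak_sums by blast
  then show "\<exists>v. \<forall>g\<in>dual. (\<lambda>j. indicator A j * g (y j *\<^sub>R T (unitvec j))) sums g v"
    by (auto simp: linear_scale[OF dual_linear] mult.assoc)
qed

lemma l1m_uniform_tail:
  fixes T :: "(nat \<Rightarrow> real) \<Rightarrow> 'e::real_normed_vector"
  assumes y: "y \<in> l1m T" and \<eta>: "\<eta> > 0"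
  obtains K where "\<And>g F. g \<in> dual \<Longrightarrow> onorm g \<le> 1 \<Longrightarrow> finite F \<Longrightarrow> F \<subseteq> {K..} \<Longrightarrow>
    (\<Sum>j\<in>F. \<bar>y j\<bar> * \<bar>g (T (unitvec j))\<bar>) \<le> \<eta>"
proof -
  obtain K where K: "\<And>g F. g \<in> dual \<Longrightarrow> onorm g \<le> 1 \<Longrightarrow> finite F \<Longrightarrow> F \<subseteq> {K..} \<Longrightarrow>
      (\<Sum>j\<in>F. \<bar>g (y j *\<^sub>R T (unitvec j))\<bar>) \<le> \<eta>"
    by (rule orlicz_pettis_uniform_tail[OF l1m_weakly_subseries_summable[OF y] \<eta>]) blast
  show thesis
  proof (rule that)
    fix g :: "'e \<Rightarrow> real" and F assume "g \<in> dual" "onorm g \<le> 1" "finite F" "F \<subseteq> {K..}"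
    then show "(\<Sum>j\<in>F. \<bar>y j\<bar> * \<bar>g (T (unitvec j))\<bar>) \<le> \<eta>"
      using K by (simp add: linear_scale[OF dual_linear] abs_mult)
  qed
qed

lemma norm_sum_scaleR_le:
  fixes t :: "nat \<Rightarrow> 'e::real_normed_vector"
  assumes "\<And>g. g \<in> dual \<Longrightarrow> onorm g \<le> 1 \<Longrightarrow> (\<Sum>j\<in>F. \<bar>a j\<bar> * \<bar>g (t j)\<bar>) \<le> M"
  shows "norm (\<Sum>j\<in>F. a j *\<^sub>R t j) \<le> M"
proof -
  obtain g where g: "g \<in> dual" "onorm g \<le> 1" "g (\<Sum>j\<in>F. a j *\<^sub>R t j) = norm (\<Sum>j\<in>F. a j *\<^sub>R t j)"
    by (rule exists_norming_functional)
  have "norm (\<Sum>j\<in>F. a j *\<^sub>R t j) = (\<Sum>j\<in>F. a j * g (t j))"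
    using g(3) dual_linear[OF g(1)] by (simp add: linear_sum linear_scale)
  also have "\<dots> \<le> (\<Sum>j\<in>F. \<bar>a j\<bar> * \<bar>g (t j)\<bar>)"
    by (intro sum_mono) (simp add: abs_mult[symmetric])
  also have "\<dots> \<le> M" using assms g by blast
  finally show ?thesis .
qed


lemma convergent_bounded_multiplier:
  fixes T :: "(nat \<Rightarrow> real) \<Rightarrow> 'e::banach"
  assumes y: "y \<in> l1m T" and b: "\<And>n. \<bar>b n\<bar> \<le> B"
  shows "convergent (\<lambda>K. \<Sum>n<K. (b n * y n) *\<^sub>R T (unitvec n))"
  unfolding Cauchy_convergent_iff[symmetric]
proof (rule CauchyI)
  let ?S = "\<lambda>K. \<Sum>n<K. (b n * y n) *\<^sub>R T (unitvec n)"
  fix e :: real assume e: "e > 0"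
  define \<eta> where "\<eta> = e / (2 * (\<bar>B\<bar> + 1))"
  have \<eta>: "\<eta> > 0" using e by (simp add: \<eta>_def)
  have "\<bar>B\<bar> * \<eta> = e * (\<bar>B\<bar> / (2 * (\<bar>B\<bar> + 1)))" by (simp add: \<eta>_def)
  also have "\<dots> < e" using e by (simp add: divide_less_eq)
  finally have B\<eta>: "\<bar>B\<bar> * \<eta> < e" .
  obtain K where K: "\<And>g F. g \<in> dual \<Longrightarrow> onorm g \<le> 1 \<Longrightarrow> finite F \<Longrightarrow> F \<subseteq> {K..} \<Longrightarrow>
      (\<Sum>j\<in>F. \<bar>y j\<bar> * \<bar>g (T (unitvec j))\<bar>) \<le> \<eta>"
    by (rule l1m_uniform_tail[OF y \<eta>]) blast
  have diff: "norm (?S m - ?S n) \<le> \<bar>B\<bar> * \<eta>" if "n \<le> m" "K \<le> n" for m n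
  proof -
    have "?S m - ?S n = (\<Sum>j\<in>{n..<m}. (b j * y j) *\<^sub>R T (unitvec j))"
      by (rule sum_lessThan_diff[OF that(1)])
    also have "norm \<dots> \<le> \<bar>B\<bar> * \<eta>"
    proof (rule norm_sum_scaleR_le)
      fix g :: "'e \<Rightarrow> real" assume g: "g \<in> dual" "onorm g \<le> 1"
      have "(\<Sum>j\<in>{n..<m}. \<bar>b j * y j\<bar> * \<bar>g (T (unitvec j))\<bar>)
          \<le> (\<Sum>j\<in>{n..<m}. \<bar>B\<bar> * (\<bar>y j\<bar> * \<bar>g (T (unitvec j))\<bar>))"
      proof (rule sum_mono)
        fix j
        have "\<bar>b j\<bar> \<le> \<bar>B\<bar>" using b[of j] by linarith
        then show "\<bar>b j * y j\<bar> * \<bar>g (T (unitvec j))\<bar> \<le> \<bar>B\<bar> * (\<bar>y j\<bar> * \<bar>g (T (unitvec j))\<bar>)"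
          by (simp add: abs_mult mult.assoc mult_right_mono)
      qed
      also have "\<dots> \<le> \<bar>B\<bar> * \<eta>"
      proof -
        have "(\<Sum>j\<in>{n..<m}. \<bar>y j\<bar> * \<bar>g (T (unitvec j))\<bar>) \<le> \<eta>"
          by (rule K[OF g]) (use that in auto)
        then show ?thesis unfolding sum_distrib_left[symmetric] by (simp add: mult_left_mono)
      qed
      finally show "(\<Sum>j\<in>{n..<m}. \<bar>b j * y j\<bar> * \<bar>g (T (unitvec j))\<bar>) \<le> \<bar>B\<bar> * \<eta>" .
    qed
    finally show ?thesis .
  qed
  have "norm (?S m - ?S n) < e" if "m \<ge> K" "n \<ge> K" for m n
    using diff[of n m] diff[of m n] that B\<eta> by (cases "n \<le> m") (auto simp: norm_minus_commute)
  then show "\<exists>M. \<forall>m\<ge>M. \<forall>n\<ge>M. norm (?S m - ?S n) < e" by blast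
qed

lemma partial_integral_tendsto:
  fixes T :: "(nat \<Rightarrow> real) \<Rightarrow> 'e::banach"
  assumes y: "y \<in> l1m T"
  shows "partial_integral T y A \<longlonglongrightarrow> vec_int T A y"
proof -
  have "convergent (partial_integral T y A)"
    using convergent_bounded_multiplier[OF y, of "indicator A" 1]
    unfolding partial_integral_def by (simp add: indicator_def)
  then obtain v where v: "partial_integral T y A \<longlonglongrightarrow> v" by (auto simp: convergent_def)
  then show ?thesis using vec_int_eq_lim[OF v y] by simp
qed

lemma l1m_mult_bounded:
  fixes T :: "(nat \<Rightarrow> real) \<Rightarrow> 'e::banach"
  assumes y: "y \<in> l1m T" and b: "\<And>n. \<bar>b n\<bar> \<le> B"
  shows "(\<lambda>n. b n * y n) \<in> l1m T"
proof (rule l1m_if_partial_integral_convergent)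
  fix A
  have "\<bar>indicator A n * b n\<bar> \<le> \<bar>B\<bar>" for n using b[of n] by (auto simp: indicator_def)
  from convergent_bounded_multiplier[OF y this] show "\<exists>v. partial_integral T (\<lambda>n. b n * y n) A \<longlonglongrightarrow> v"
    unfolding partial_integral_def by (simp add: mult.assoc convergent_def)
qed

lemma l1m_add:
  fixes T :: "(nat \<Rightarrow> real) \<Rightarrow> 'e::banach"
  assumes y: "y \<in> l1m T" and w: "w \<in> l1m T"
  shows "(\<lambda>n. y n + w n) \<in> l1m T" "vec_int T A (\<lambda>n. y n + w n) = vec_int T A y + vec_int T A w"
proof -
  have lim: "partial_integral T (\<lambda>n. y n + w n) B \<longlonglongrightarrow> vec_int T B y + vec_int T B w" for B
  proof -
    have "partial_integral T (\<lambda>n. y n + w n) B = (\<lambda>K. partial_integral T y B K + partial_integral T w B K)"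
      unfolding partial_integral_def by (simp add: fun_eq_iff algebra_simps scaleR_add_left sum.distrib)
    then show ?thesis using tendsto_add[OF partial_integral_tendsto[OF y] partial_integral_tendsto[OF w]]
      by simp
  qed
  show mem: "(\<lambda>n. y n + w n) \<in> l1m T" using lim by (intro l1m_if_partial_integral_convergent) blast
  show "vec_int T A (\<lambda>n. y n + w n) = vec_int T A y + vec_int T A w"
    using vec_int_eq_lim[OF lim mem] .
qed

lemma vec_int_scale:
  fixes T :: "(nat \<Rightarrow> real) \<Rightarrow> 'e::banach"
  assumes y: "y \<in> l1m T"
  shows "vec_int T A (\<lambda>n. c * y n) = c *\<^sub>R vec_int T A y"
proof -
  have lim: "partial_integral T (\<lambda>n. c * y n) B \<longlonglongrightarrow> c *\<^sub>R vec_int T B y" for B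
  proof -
    have "partial_integral T (\<lambda>n. c * y n) B = (\<lambda>K. c *\<^sub>R partial_integral T y B K)"
      unfolding partial_integral_def by (simp add: fun_eq_iff scaleR_sum_right algebra_simps)
    then show ?thesis using tendsto_scaleR[OF tendsto_const partial_integral_tendsto[OF y]] by simp
  qed
  have "(\<lambda>n. c * y n) \<in> l1m T" using lim by (intro l1m_if_partial_integral_convergent) blast
  then show ?thesis using vec_int_eq_lim[OF lim] by blast
qed

lemma l1m_sum_bounded:
  fixes T :: "(nat \<Rightarrow> real) \<Rightarrow> 'e::real_normed_vector"
  assumes y: "y \<in> l1m T"
  obtains M where "\<And>g. g \<in> dual \<Longrightarrow> onorm g \<le> 1 \<Longrightarrow> (\<Sum>n. \<bar>g (T (unitvec n))\<bar> * \<bar>y n\<bar>) \<le> M"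
proof -
  obtain K where K: "\<And>g F. g \<in> dual \<Longrightarrow> onorm g \<le> 1 \<Longrightarrow> finite F \<Longrightarrow> F \<subseteq> {K..} \<Longrightarrow>
      (\<Sum>j\<in>F. \<bar>y j\<bar> * \<bar>g (T (unitvec j))\<bar>) \<le> 1"
    by (rule l1m_uniform_tail[OF y, of 1]) auto
  define M where "M = (\<Sum>n<K. norm (T (unitvec n)) * \<bar>y n\<bar>) + 1"
  have "(\<Sum>n. \<bar>g (T (unitvec n))\<bar> * \<bar>y n\<bar>) \<le> M" if g: "g \<in> dual" "onorm g \<le> 1" for g
  proof (rule suminf_le_const)
    let ?f = "\<lambda>n. \<bar>g (T (unitvec n))\<bar> * \<bar>y n\<bar>"
    show "summable ?f" using l1m_summable[OF y g(1)] .
    fix N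
    have "sum ?f {..<N} \<le> sum ?f {..<max N K}" by (intro sum_mono2) auto
    also have "\<dots> = sum ?f {..<K} + sum ?f {K..<max N K}"
      using sum_lessThan_diff[of K "max N K" ?f] by simp
    also have "sum ?f {..<K} \<le> (\<Sum>n<K. norm (T (unitvec n)) * \<bar>y n\<bar>)"
      by (intro sum_mono mult_right_mono dual_abs_le_norm[OF g]) auto
    also have "sum ?f {K..<max N K} \<le> 1"
      using K[OF g finite_atLeastLessThan, of K "max N K"] by (simp add: mult.commute subset_iff)
    finally show "sum ?f {..<N} \<le> M" unfolding M_def by simp
  qed
  then show thesis by (rule that)
qed

lemma norm_l1m_ge_sum:
  fixes T :: "(nat \<Rightarrow> real) \<Rightarrow> 'e::real_normed_vector"
  assumes y: "y \<in> l1m T" and g: "g \<in> dual" "onorm g \<le> 1"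
  shows "(\<Sum>n. \<bar>g (T (unitvec n))\<bar> * \<bar>y n\<bar>) \<le> norm_l1m T y"
proof -
  have int: "integral\<^sup>L (var_meas T f) (\<lambda>n. \<bar>y n\<bar>) = (\<Sum>n. \<bar>f (T (unitvec n))\<bar> * \<bar>y n\<bar>)"
    if "f \<in> dual" for f
    using var_meas_integral[of f T "\<lambda>n. \<bar>y n\<bar>"] l1m_summable[OF y that] by simp
  obtain M where M: "\<And>g. g \<in> dual \<Longrightarrow> onorm g \<le> 1 \<Longrightarrow> (\<Sum>n. \<bar>g (T (unitvec n))\<bar> * \<bar>y n\<bar>) \<le> M"
    by (rule l1m_sum_bounded[OF y]) blast
  have "bdd_above ((\<lambda>f. integral\<^sup>L (var_meas T f) (\<lambda>n. \<bar>y n\<bar>)) ` {f\<in>dual. onorm f \<le> 1})"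
    using M int by (auto intro!: bdd_aboveI[of _ M])
  then have "integral\<^sup>L (var_meas T g) (\<lambda>n. \<bar>y n\<bar>) \<le> norm_l1m T y"
    unfolding norm_l1m_def by (rule cSUP_upper[rotated]) (use g in auto)
  then show ?thesis using int[OF g(1)] by simp
qed


lemma norm_l1m_nonneg:
  fixes T :: "(nat \<Rightarrow> real) \<Rightarrow> 'e::real_normed_vector"
  assumes "y \<in> l1m T"
  shows "0 \<le> norm_l1m T y"
  using norm_l1m_ge_sum[OF assms, of "\<lambda>_. 0"] by (simp add: dual_def onorm_zero)

lemma norm_l1m_abs: "norm_l1m T (\<lambda>n. \<bar>y n\<bar>) = norm_l1m T y"
  unfolding norm_l1m_def by simp

lemma norm_sum_le_norm_l1m:
  fixes T :: "(nat \<Rightarrow> real) \<Rightarrow> 'e::real_normed_vector"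
  assumes y: "y \<in> l1m T" and F: "finite F"
  shows "norm (\<Sum>j\<in>F. y j *\<^sub>R T (unitvec j)) \<le> norm_l1m T y"
proof (rule norm_sum_scaleR_le)
  fix g :: "'e \<Rightarrow> real" assume g: "g \<in> dual" "onorm g \<le> 1"
  have "(\<Sum>j\<in>F. \<bar>y j\<bar> * \<bar>g (T (unitvec j))\<bar>) \<le> (\<Sum>n. \<bar>g (T (unitvec n))\<bar> * \<bar>y n\<bar>)"
    using sum_le_suminf[OF l1m_summable[OF y g(1)] F] by (simp add: mult.commute)
  also have "\<dots> \<le> norm_l1m T y" by (rule norm_l1m_ge_sum[OF y g])
  finally show "(\<Sum>j\<in>F. \<bar>y j\<bar> * \<bar>g (T (unitvec j))\<bar>) \<le> norm_l1m T y" .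
qed

lemma norm_vec_int_le:
  fixes T :: "(nat \<Rightarrow> real) \<Rightarrow> 'e::real_normed_vector"
  assumes y: "y \<in> l1m T"
  shows "norm (vec_int T A y) \<le> norm_l1m T y"
proof -
  obtain g where g: "g \<in> dual" "onorm g \<le> 1" "g (vec_int T A y) = norm (vec_int T A y)"
    by (rule exists_norming_functional)
  let ?f = "\<lambda>n. indicator A n * y n * g (T (unitvec n))"
  have sa: "summable (\<lambda>n. \<bar>?f n\<bar>)"
    by (rule summable_comparison_test'[OF l1m_summable[OF y g(1)], of 0])
      (auto simp: indicator_def abs_mult)
  have "norm (vec_int T A y) = suminf ?f" using g(3) sums_unique[OF vec_int_sums[OF y g(1)]] by simp
  also have "\<dots> \<le> (\<Sum>n. \<bar>?f n\<bar>)" using summable_rabs[OF sa] by simp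
  also have "\<dots> \<le> (\<Sum>n. \<bar>g (T (unitvec n))\<bar> * \<bar>y n\<bar>)"
    by (rule suminf_le[OF _ sa l1m_summable[OF y g(1)]]) (auto simp: indicator_def abs_mult)
  also have "\<dots> \<le> norm_l1m T y" by (rule norm_l1m_ge_sum[OF y g(1,2)])
  finally show ?thesis .
qed

lemma l1m_norm_tail:
  fixes T :: "(nat \<Rightarrow> real) \<Rightarrow> 'e::real_normed_vector"
  assumes y: "y \<in> l1m T" and \<eta>: "\<eta> > 0"
  obtains K where "\<And>F. finite F \<Longrightarrow> F \<subseteq> {K..} \<Longrightarrow> norm (\<Sum>j\<in>F. y j *\<^sub>R T (unitvec j)) \<le> \<eta>"
proof -
  obtain K where K: "\<And>g F. g \<in> dual \<Longrightarrow> onorm g \<le> 1 \<Longrightarrow> finite F \<Longrightarrow> F \<subseteq> {K..} \<Longrightarrow>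
      (\<Sum>j\<in>F. \<bar>y j\<bar> * \<bar>g (T (unitvec j))\<bar>) \<le> \<eta>"
    by (rule l1m_uniform_tail[OF y \<eta>]) blast
  show thesis
  proof (rule that)
    fix F :: "nat set" assume "finite F" "F \<subseteq> {K..}"
    then show "norm (\<Sum>j\<in>F. y j *\<^sub>R T (unitvec j)) \<le> \<eta>" using K by (intro norm_sum_scaleR_le)
  qed
qed

lemma sum_indicator_scaleR_split:
  fixes t :: "nat \<Rightarrow> 'e::real_vector"
  assumes S: "finite S"
  shows "(\<Sum>j\<in>S. (indicator A j * y j) *\<^sub>R t j) =
     (\<Sum>j\<in>{j\<in>S. j \<in> A \<and> 0 \<le> y j}. \<bar>y j\<bar> *\<^sub>R t j) - (\<Sum>j\<in>{j\<in>S. j \<in> A \<and> y j < 0}. \<bar>y j\<bar> *\<^sub>R t j)"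
proof -
  let ?P = "{j\<in>S. j \<in> A \<and> 0 \<le> y j}" and ?Q = "{j\<in>S. j \<in> A \<and> y j < 0}"
  let ?f = "\<lambda>j. (indicator A j * y j) *\<^sub>R t j"
  have "(\<Sum>j\<in>S. ?f j) = (\<Sum>j\<in>?P \<union> ?Q. ?f j)"
    by (rule sum.mono_neutral_right[OF S]) (auto simp: indicator_def)
  also have "\<dots> = (\<Sum>j\<in>?P. ?f j) + (\<Sum>j\<in>?Q. ?f j)"
    by (rule sum.union_disjoint) (use S in auto)
  also have "(\<Sum>j\<in>?P. ?f j) = (\<Sum>j\<in>?P. \<bar>y j\<bar> *\<^sub>R t j)" by (intro sum.cong) auto
  also have "(\<Sum>j\<in>?Q. ?f j) = - (\<Sum>j\<in>?Q. \<bar>y j\<bar> *\<^sub>R t j)"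
    by (simp add: sum_negf[symmetric])
  finally show ?thesis by simp
qed

lemma l1m_if_norm_tail:
  fixes T :: "(nat \<Rightarrow> real) \<Rightarrow> 'e::banach"
  assumes tail: "\<And>\<eta>. \<eta> > 0 \<Longrightarrow>
    \<exists>K. \<forall>F. finite F \<longrightarrow> F \<subseteq> {K..} \<longrightarrow> norm (\<Sum>j\<in>F. \<bar>y j\<bar> *\<^sub>R T (unitvec j)) \<le> \<eta>"
  shows "y \<in> l1m T"
proof (rule l1m_if_partial_integral_convergent)
  fix A
  have "Cauchy (partial_integral T y A)"
  proof (rule CauchyI)
    fix e :: real assume e: "e > 0"
    obtain K where K: "\<And>F. finite F \<Longrightarrow> F \<subseteq> {K..} \<Longrightarrow> norm (\<Sum>j\<in>F. \<bar>y j\<bar> *\<^sub>R T (unitvec j)) \<le> e / 3"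
      using tail[of "e / 3"] e by auto
    have diff: "norm (partial_integral T y A m - partial_integral T y A n) \<le> 2 * (e / 3)"
      if "n \<le> m" "K \<le> n" for m n
    proof -
      let ?P = "{j\<in>{n..<m}. j \<in> A \<and> 0 \<le> y j}" and ?Q = "{j\<in>{n..<m}. j \<in> A \<and> y j < 0}"
      have "partial_integral T y A m - partial_integral T y A n
          = (\<Sum>j\<in>?P. \<bar>y j\<bar> *\<^sub>R T (unitvec j)) - (\<Sum>j\<in>?Q. \<bar>y j\<bar> *\<^sub>R T (unitvec j))"
        unfolding partial_integral_def sum_lessThan_diff[OF that(1)]
        by (rule sum_indicator_scaleR_split) simp
      moreover have "norm (\<Sum>j\<in>?P. \<bar>y j\<bar> *\<^sub>R T (unitvec j)) \<le> e / 3"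
        "norm (\<Sum>j\<in>?Q. \<bar>y j\<bar> *\<^sub>R T (unitvec j)) \<le> e / 3"
        using that by (intro K; auto)+
      ultimately show ?thesis by (smt (verit) norm_triangle_ineq4)
    qed
    have "norm (partial_integral T y A m - partial_integral T y A n) < e" if "m \<ge> K" "n \<ge> K" for m n
      using diff[of n m] diff[of m n] that e by (cases "n \<le> m") (auto simp: norm_minus_commute)
    then show "\<exists>M. \<forall>m\<ge>M. \<forall>n\<ge>M. norm (partial_integral T y A m - partial_integral T y A n) < e"
      by blast
  qed
  then show "\<exists>v. partial_integral T y A \<longlonglongrightarrow> v" by (simp add: Cauchy_convergent_iff convergent_def)
qed

lemma norm_vec_int_le_twice:
  fixes T :: "(nat \<Rightarrow> real) \<Rightarrow> 'e::banach"
  assumes y: "y \<in> l1m T" and M: "\<And>F. finite F \<Longrightarrow> norm (\<Sum>j\<in>F. \<bar>y j\<bar> *\<^sub>R T (unitvec j)) \<le> M"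
  shows "norm (vec_int T A y) \<le> 2 * M"
proof (rule Lim_bounded[OF tendsto_norm[OF partial_integral_tendsto[OF y]], of 0])
  show "\<forall>K\<ge>0. norm (partial_integral T y A K) \<le> 2 * M"
  proof (intro allI impI)
    fix K :: nat
    let ?P = "{j\<in>{..<K}. j \<in> A \<and> 0 \<le> y j}" and ?Q = "{j\<in>{..<K}. j \<in> A \<and> y j < 0}"
    have "partial_integral T y A K
        = (\<Sum>j\<in>?P. \<bar>y j\<bar> *\<^sub>R T (unitvec j)) - (\<Sum>j\<in>?Q. \<bar>y j\<bar> *\<^sub>R T (unitvec j))"
      unfolding partial_integral_def by (rule sum_indicator_scaleR_split) simp
    moreover have "norm (\<Sum>j\<in>?P. \<bar>y j\<bar> *\<^sub>R T (unitvec j)) \<le> M" "norm (\<Sum>j\<in>?Q. \<bar>y j\<bar> *\<^sub>R T (unitvec j)) \<le> M"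
      by (rule M, simp)+
    ultimately show "norm (partial_integral T y A K) \<le> 2 * M" by (smt (verit) norm_triangle_ineq4)
  qed
qed

section \<open>Power domination\<close>

lemma power_dominatedE:
  fixes T :: "(nat \<Rightarrow> real) \<Rightarrow> 'e::real_normed_vector"
  assumes "power_dominated T r" and r: "r > 0"
  obtains C where "C > 0"
    "\<And>F u B. finite F \<Longrightarrow> (\<And>j. 0 \<le> u j) \<Longrightarrow>
      (\<And>N. N \<subseteq> F \<Longrightarrow> norm (\<Sum>j\<in>N. u j *\<^sub>R T (unitvec j)) \<le> B) \<Longrightarrow>
      norm (\<Sum>j\<in>F. (u j powr r) *\<^sub>R T (unitvec j)) \<le> (C * B) powr r"
proof -
  obtain C where C: "C > 0" and dom: "\<And>F x. finite F \<Longrightarrow> (\<forall>j\<in>F. 0 \<le> x j) \<Longrightarrow>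
      norm (\<Sum>j\<in>F. (x j powr r) *\<^sub>R T (unitvec j)) powr (1 / r)
        \<le> C * Sup {norm (\<Sum>j\<in>N. x j *\<^sub>R T (unitvec j)) | N. N \<subseteq> F}"
    using assms(1) unfolding power_dominated_def by blast
  show thesis
  proof (rule that[OF C])
    fix F u B
    assume F: "finite F" and u: "\<And>j. 0 \<le> u j"
      and B: "\<And>N. N \<subseteq> F \<Longrightarrow> norm (\<Sum>j\<in>N. u j *\<^sub>R T (unitvec j)) \<le> B"
    let ?a = "norm (\<Sum>j\<in>F. (u j powr r) *\<^sub>R T (unitvec j))"
    have "Sup {norm (\<Sum>j\<in>N. u j *\<^sub>R T (unitvec j)) | N. N \<subseteq> F} \<le> B"
      by (rule cSup_least) (use B in auto)
    then have "?a powr (1 / r) \<le> C * B"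
      using dom[OF F, of u] u C by (smt (verit) mult_left_mono)
    then have "(?a powr (1 / r)) powr r \<le> (C * B) powr r" using r by (intro powr_mono2) auto
    then show "?a \<le> (C * B) powr r" using r by (simp add: powr_powr)
  qed
qed

lemma power_dominated_l1m:
  fixes T :: "(nat \<Rightarrow> real) \<Rightarrow> 'e::banach"
  assumes "power_dominated T r" and r: "r > 0"
  obtains C where "C > 0"
    "\<And>y. (\<lambda>n. \<bar>y n\<bar> powr (1 / r)) \<in> l1m T \<Longrightarrow> y \<in> l1m T"
    "\<And>y A. (\<lambda>n. \<bar>y n\<bar> powr (1 / r)) \<in> l1m T \<Longrightarrow>
      norm (vec_int T A y) \<le> 2 * (C * norm_l1m T (\<lambda>n. \<bar>y n\<bar> powr (1 / r))) powr r"
proof -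
  obtain C where C: "C > 0" and dom: "\<And>F u B. finite F \<Longrightarrow> (\<And>j. 0 \<le> u j) \<Longrightarrow>
      (\<And>N. N \<subseteq> F \<Longrightarrow> norm (\<Sum>j\<in>N. u j *\<^sub>R T (unitvec j)) \<le> B) \<Longrightarrow>
      norm (\<Sum>j\<in>F. (u j powr r) *\<^sub>R T (unitvec j)) \<le> (C * B) powr r"
    by (rule power_dominatedE[OF assms]) blast
  have dom_abs: "norm (\<Sum>j\<in>F. \<bar>y j\<bar> *\<^sub>R T (unitvec j)) \<le> (C * B) powr r"
    if "finite F" "\<And>N. N \<subseteq> F \<Longrightarrow> norm (\<Sum>j\<in>N. (\<bar>y j\<bar> powr (1 / r)) *\<^sub>R T (unitvec j)) \<le> B"
    for F y B
    using dom[of F "\<lambda>j. \<bar>y j\<bar> powr (1 / r)" B] that r by (simp add: powr_powr)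
  have mem: "y \<in> l1m T" if u: "(\<lambda>n. \<bar>y n\<bar> powr (1 / r)) \<in> l1m T" for y
  proof (rule l1m_if_norm_tail)
    fix \<eta> :: real assume \<eta>: "\<eta> > 0"
    define \<eta>' where "\<eta>' = \<eta> powr (1 / r) / C"
    have "\<eta>' > 0" using \<eta> C by (simp add: \<eta>'_def)
    then obtain K where K: "\<And>F. finite F \<Longrightarrow> F \<subseteq> {K..} \<Longrightarrow>
        norm (\<Sum>j\<in>F. (\<bar>y j\<bar> powr (1 / r)) *\<^sub>R T (unitvec j)) \<le> \<eta>'"
      by (rule l1m_norm_tail[OF u]) blast
    have "norm (\<Sum>j\<in>F. \<bar>y j\<bar> *\<^sub>R T (unitvec j)) \<le> \<eta>" if F: "finite F" "F \<subseteq> {K..}" for F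
    proof -
      have "norm (\<Sum>j\<in>F. \<bar>y j\<bar> *\<^sub>R T (unitvec j)) \<le> (C * \<eta>') powr r"
        using F by (intro dom_abs K) (auto intro: finite_subset)
      also have "(C * \<eta>') powr r = \<eta>" using C \<eta> r by (simp add: \<eta>'_def powr_powr)
      finally show ?thesis .
    qed
    then show "\<exists>K. \<forall>F. finite F \<longrightarrow> F \<subseteq> {K..} \<longrightarrow> norm (\<Sum>j\<in>F. \<bar>y j\<bar> *\<^sub>R T (unitvec j)) \<le> \<eta>"
      by blast
  qed
  have "norm (vec_int T A y) \<le> 2 * (C * norm_l1m T (\<lambda>n. \<bar>y n\<bar> powr (1 / r))) powr r"
    if u: "(\<lambda>n. \<bar>y n\<bar> powr (1 / r)) \<in> l1m T" for y A
  proof (rule norm_vec_int_le_twice[OF mem[OF u]])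
    fix F :: "nat set" assume "finite F"
    then show "norm (\<Sum>j\<in>F. \<bar>y j\<bar> *\<^sub>R T (unitvec j)) \<le> (C * norm_l1m T (\<lambda>n. \<bar>y n\<bar> powr (1 / r))) powr r"
      by (intro dom_abs norm_sum_le_norm_l1m[OF u]) (auto intro: finite_subset)
  qed
  with C mem show thesis by (rule that)
qed

section \<open>Truncation\<close>

lemma ell1_finite_support:
  assumes "\<And>n. n \<ge> K \<Longrightarrow> z n = 0"
  shows "z \<in> ell1"
  unfolding ell1_def mem_Collect_eq
  by (rule summable_finite[of "{..<K}"]) (use assms in \<open>auto simp: not_less\<close>)

lemma ellp_finite_support:
  assumes "\<And>n. n \<ge> K \<Longrightarrow> z n = 0"
  shows "z \<in> ellp p"
  unfolding ellp_def mem_Collect_eq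
  by (rule summable_finite[of "{..<K}"]) (use assms in \<open>auto simp: not_less\<close>)

lemma unitvec_ell1: "unitvec n \<in> ell1"
  by (rule ell1_finite_support[of "Suc n"]) (simp add: unitvec_def)

lemma lin_on_add: "lin_on A R \<Longrightarrow> x \<in> A \<Longrightarrow> y \<in> A \<Longrightarrow> R (\<lambda>n. x n + y n) = R x + R y"
  by (simp add: lin_on_def)

lemma lin_on_scale: "lin_on A R \<Longrightarrow> x \<in> A \<Longrightarrow> R (\<lambda>n. c * x n) = c *\<^sub>R R x"
  by (simp add: lin_on_def)

lemma lin_on_zero:
  assumes "lin_on A R" "x \<in> A"
  shows "R (\<lambda>n. 0) = 0"
  using lin_on_scale[OF assms, of 0] by simp

lemma lin_on_ell1_truncation:
  assumes lin: "lin_on ell1 T"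
  shows "T (\<lambda>n. if n < K then z n else 0) = (\<Sum>n<K. z n *\<^sub>R T (unitvec n))"
proof (induct K)
  case 0
  show ?case using lin_on_zero[OF lin unitvec_ell1] by simp
next
  case (Suc K)
  have "(\<lambda>n. if n < Suc K then z n else 0) = (\<lambda>n. (if n < K then z n else 0) + z K * unitvec K n)"
    by (auto simp: fun_eq_iff unitvec_def less_Suc_eq)
  moreover have "(\<lambda>n. if n < K then z n else 0) \<in> ell1" by (rule ell1_finite_support[of K]) simp
  ultimately have "T (\<lambda>n. if n < Suc K then z n else 0)
      = T (\<lambda>n. if n < K then z n else 0) + z K *\<^sub>R T (unitvec K)"
    using lin_on_add[OF lin] lin_on_scale[OF lin unitvec_ell1] unitvec_ell1
      ell1_finite_support[of "Suc K" "\<lambda>n. z K * unitvec K n"]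
    by (simp add: unitvec_def)
  then show ?case using Suc by simp
qed

lemma suminf_tail_tendsto_zero:
  fixes f :: "nat \<Rightarrow> real"
  assumes "summable f"
  shows "(\<lambda>K. \<Sum>n. if n < K then 0 else f n) \<longlonglongrightarrow> 0"
proof -
  have "(\<Sum>n. if n < K then 0 else f n) = suminf f - (\<Sum>n<K. f n)" for K
  proof -
    have "(\<lambda>n. if n < K then 0 else f n) = (\<lambda>n. f n - (if n < K then f n else 0))" by auto
    moreover have "summable (\<lambda>n. if n < K then f n else 0)" by (rule summable_finite[of "{..<K}"]) auto
    moreover have "(\<Sum>n. if n < K then f n else 0) = (\<Sum>n<K. f n)"
      by (subst suminf_finite[of "{..<K}"]) auto
    ultimately show ?thesis using suminf_diff[OF assms, of "\<lambda>n. if n < K then f n else 0"] by simp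
  qed
  moreover have "(\<lambda>K. suminf f - (\<Sum>n<K. f n)) \<longlonglongrightarrow> suminf f - suminf f"
    by (intro tendsto_diff tendsto_const summable_LIMSEQ[OF assms])
  ultimately show ?thesis by simp
qed

lemma partial_sums_tendsto_if_tails_vanish:
  fixes R T :: "(nat \<Rightarrow> real) \<Rightarrow> 'e::real_normed_vector"
  assumes R: "lin_on W R" and T: "lin_on ell1 T"
    and head: "\<And>K. (\<lambda>n. if n < K then x n else 0) \<in> W"
    and RT: "\<And>y. y \<in> ell1 \<Longrightarrow> y \<in> W \<Longrightarrow> R y = T y"
    and tail: "\<And>K. (\<lambda>n. if n < K then 0 else x n) \<in> W"
    and bound: "\<And>K. norm (R (\<lambda>n. if n < K then 0 else x n)) \<le> b K" and vanish: "b \<longlonglongrightarrow> 0"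
  shows "(\<lambda>K. \<Sum>n<K. x n *\<^sub>R T (unitvec n)) \<longlonglongrightarrow> R x"
proof -
  have "R x = (\<Sum>n<K. x n *\<^sub>R T (unitvec n)) + R (\<lambda>n. if n < K then 0 else x n)" for K
  proof -
    have "(\<lambda>n. (if n < K then x n else 0) + (if n < K then 0 else x n)) = x" by auto
    then have "R x = R (\<lambda>n. if n < K then x n else 0) + R (\<lambda>n. if n < K then 0 else x n)"
      using lin_on_add[OF R head[of K] tail[of K]] by simp
    moreover have "R (\<lambda>n. if n < K then x n else 0) = (\<Sum>n<K. x n *\<^sub>R T (unitvec n))"
      using RT[OF ell1_finite_support[of K] head] lin_on_ell1_truncation[OF T] by simp
    ultimately show ?thesis by simp
  qed
  then have "norm ((\<Sum>n<K. x n *\<^sub>R T (unitvec n)) - R x) = norm (R (\<lambda>n. if n < K then 0 else x n))"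
    for K by (metis add_diff_cancel_left' norm_minus_commute)
  then have "(\<lambda>K. (\<Sum>n<K. x n *\<^sub>R T (unitvec n)) - R x) \<longlonglongrightarrow> 0"
    using bound by (intro Lim_null_comparison[OF _ vanish] always_eventually) simp
  then show ?thesis by (rule LIM_zero_cancel)
qed

lemma cont_lin_ell1_l1m:
  fixes T :: "(nat \<Rightarrow> real) \<Rightarrow> 'e::real_normed_vector"
  assumes T: "cont_lin_ell1 T" and x: "x \<in> ell1"
  shows "x \<in> l1m T" "I_m T x = T x"
proof -
  have lin: "lin_on ell1 T" using T by (simp add: cont_lin_ell1_def)
  obtain C where C: "\<And>x. x \<in> ell1 \<Longrightarrow> norm (T x) \<le> C * (\<Sum>n. \<bar>x n\<bar>)"
    using T by (auto simp: cont_lin_ell1_def)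
  have lim: "partial_integral T x A \<longlonglongrightarrow> T (\<lambda>n. indicator A n * x n)" for A
    unfolding partial_integral_def
  proof (rule partial_sums_tendsto_if_tails_vanish[OF lin lin])
    let ?y = "\<lambda>n. indicator A n * x n" and ?tail = "\<lambda>K n. if n < K then 0 else indicator A n * x n"
    have y: "summable (\<lambda>n. \<bar>?y n\<bar>)"
      using x unfolding ell1_def
      by (auto intro: summable_comparison_test'[of "\<lambda>n. \<bar>x n\<bar>" 0] simp: indicator_def)
    show "(\<lambda>n. if n < K then ?y n else 0) \<in> ell1" for K by (rule ell1_finite_support[of K]) simp
    show tail: "?tail K \<in> ell1" for K
      unfolding ell1_def by (auto intro: summable_comparison_test'[OF y, of 0])
    show "norm (T (?tail K)) \<le> C * (\<Sum>n. \<bar>?tail K n\<bar>)" for K by (rule C[OF tail])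
    have "(\<lambda>K. \<Sum>n. if n < K then 0 else \<bar>?y n\<bar>) \<longlonglongrightarrow> 0" by (rule suminf_tail_tendsto_zero[OF y])
    moreover have "(\<lambda>n. \<bar>?tail K n\<bar>) = (\<lambda>n. if n < K then 0 else \<bar>?y n\<bar>)" for K by auto
    ultimately show "(\<lambda>K. C * (\<Sum>n. \<bar>?tail K n\<bar>)) \<longlonglongrightarrow> 0"
      by (simp add: tendsto_mult_right_zero)
  qed simp
  show mem: "x \<in> l1m T" using lim by (intro l1m_if_partial_integral_convergent) blast
  show "I_m T x = T x" using vec_int_eq_lim[OF lim mem] by (simp add: I_m_def)
qed

lemma has_ext_ellp_root_l1m:
  fixes T :: "(nat \<Rightarrow> real) \<Rightarrow> 'e::real_normed_vector"
  assumes T: "cont_lin_ell1 T" and ext: "has_ext_ellp T p" and p: "p > 0" and x: "x \<in> ell1"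
  shows "(\<lambda>n. \<bar>x n\<bar> powr (1 / p)) \<in> l1m T"
proof (rule l1m_if_partial_integral_convergent)
  fix A
  obtain T' C where T'T: "\<And>x. x \<in> ell1 \<Longrightarrow> T' x = T x" and T': "lin_on (ellp p) T'"
    and C: "\<And>x. x \<in> ellp p \<Longrightarrow> norm (T' x) \<le> C * (\<Sum>n. \<bar>x n\<bar> powr p) powr (1 / p)"
    using ext unfolding has_ext_ellp_def by blast
  have lin: "lin_on ell1 T" using T by (simp add: cont_lin_ell1_def)
  define w where "w n = indicator A n * \<bar>x n\<bar> powr (1 / p)" for n
  let ?tail = "\<lambda>K n. if n < K then 0 else w n"
  have tail_p: "(\<lambda>n. \<bar>?tail K n\<bar> powr p) = (\<lambda>n. if n < K then 0 else indicator A n * \<bar>x n\<bar>)" for K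
    using p by (auto simp: w_def fun_eq_iff powr_powr indicator_def)
  have xA: "summable (\<lambda>n. indicator A n * \<bar>x n\<bar>)"
    using x unfolding ell1_def
    by (auto intro: summable_comparison_test'[of "\<lambda>n. \<bar>x n\<bar>" 0] simp: indicator_def)
  have "(\<lambda>K. \<Sum>n<K. w n *\<^sub>R T (unitvec n)) \<longlonglongrightarrow> T' w"
  proof (rule partial_sums_tendsto_if_tails_vanish[OF T' lin])
    show "(\<lambda>n. if n < K then w n else 0) \<in> ellp p" for K by (rule ellp_finite_support[of K]) simp
    show tail: "?tail K \<in> ellp p" for K
      unfolding ellp_def mem_Collect_eq tail_p by (rule summable_comparison_test'[OF xA, of 0]) auto
    show "T' y = T y" if "y \<in> ell1" for y using T'T[OF that] .
    show "norm (T' (?tail K)) \<le> C * (\<Sum>n. \<bar>?tail K n\<bar> powr p) powr (1 / p)" for K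
      by (rule C[OF tail])
    have "(\<lambda>K. (\<Sum>n. \<bar>?tail K n\<bar> powr p) powr (1 / p)) \<longlonglongrightarrow> 0"
    proof (rule tendsto_zero_powrI[OF _ tendsto_const])
      show "(\<lambda>K. \<Sum>n. \<bar>?tail K n\<bar> powr p) \<longlonglongrightarrow> 0"
        unfolding tail_p by (rule suminf_tail_tendsto_zero[OF xA])
      show "\<forall>\<^sub>F K in sequentially. 0 \<le> (\<Sum>n. \<bar>?tail K n\<bar> powr p)"
        using tail by (intro always_eventually allI suminf_nonneg) (auto simp: ellp_def)
    qed (use p in simp)
    then show "(\<lambda>K. C * (\<Sum>n. \<bar>?tail K n\<bar> powr p) powr (1 / p)) \<longlonglongrightarrow> 0"
      by (simp add: tendsto_mult_right_zero)
  qed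
  then show "\<exists>v. partial_integral T (\<lambda>n. \<bar>x n\<bar> powr (1 / p)) A \<longlonglongrightarrow> v"
    unfolding partial_integral_def w_def by blast
qed

section \<open>Quasi-Banach function spaces and optimality\<close>

lemma qbfs_solid:
  assumes "qbfs \<xi> Z N" "f \<in> Z" "\<And>n. \<bar>g n\<bar> \<le> \<bar>f n\<bar>"
  shows "g \<in> Z" "N g \<le> N f"
  using assms unfolding qbfs_def by (auto intro: AE_I2)

lemma qbfs_nonneg: "qbfs \<xi> Z N \<Longrightarrow> f \<in> Z \<Longrightarrow> 0 \<le> N f"
  unfolding qbfs_def by blast

lemma qbfs_zero:
  assumes "qbfs \<xi> Z N"
  shows "(\<lambda>n. 0) \<in> Z" "N (\<lambda>n. 0) = 0"
  using assms unfolding qbfs_def by auto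

lemma qbfs_tail:
  assumes "qbfs \<xi> Z N" "f \<in> Z"
  shows "(\<lambda>n. if n < K then 0 else \<bar>f n\<bar>) \<in> Z"
  by (rule qbfs_solid(1)[OF assms]) auto

lemma sigma_oc_tail_tendsto_zero:
  assumes Q: "qbfs \<xi> Z N" and soc: "sigma_oc \<xi> Z N" and f: "f \<in> Z"
  shows "(\<lambda>K. N (\<lambda>n. if n < K then 0 else \<bar>f n\<bar>)) \<longlonglongrightarrow> 0"
proof -
  let ?F = "\<lambda>K n. if n < K then 0 else \<bar>f n\<bar>"
  have "(\<lambda>k. ?F k n) \<longlonglongrightarrow> 0" for n
    by (rule tendsto_eventually) (auto simp: eventually_sequentially intro!: exI[of _ "Suc n"])
  then have "AE n in \<xi>. (\<forall>k. ?F (Suc k) n \<le> ?F k n) \<and> (\<lambda>k. ?F k n) \<longlonglongrightarrow> 0"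
    by (intro AE_I2) auto
  moreover have "\<forall>k. ?F k \<in> Z" using qbfs_tail[OF Q f] by blast
  ultimately show ?thesis using soc unfolding sigma_oc_def by (elim allE[of _ ?F]) blast
qed

lemma powsum_norm_le:
  assumes Q: "qbfs \<xi> Z N" and d: "decomp Z p f f1 f2"
  shows "powsum_norm Z N p f \<le> N (\<lambda>n. \<bar>f1 n\<bar> powr p) powr (1 / p) + N f2"
  unfolding powsum_norm_def
proof (rule cInf_lower)
  show "bdd_below {N (\<lambda>n. \<bar>f1 n\<bar> powr p) powr (1 / p) + N f2 | f1 f2. decomp Z p f f1 f2}"
    using qbfs_nonneg[OF Q] unfolding decomp_def
    by (intro bdd_belowI[of _ 0]) (auto intro!: add_nonneg_nonneg)
qed (use d in blast)

lemma le_powsum_norm: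
  assumes f: "f \<in> powsum Z p"
    and le: "\<And>f1 f2. decomp Z p f f1 f2 \<Longrightarrow> u \<le> N (\<lambda>n. \<bar>f1 n\<bar> powr p) powr (1 / p) + N f2"
  shows "u \<le> powsum_norm Z N p f"
  unfolding powsum_norm_def by (rule cInf_greatest) (use f le in \<open>auto simp: powsum_def\<close>)

lemma powsum_norm_nonneg:
  assumes Q: "qbfs \<xi> Z N" and f: "f \<in> powsum Z p"
  shows "0 \<le> powsum_norm Z N p f"
  by (rule le_powsum_norm[OF f]) (use qbfs_nonneg[OF Q] in \<open>auto simp: decomp_def\<close>)

lemma decomp_right: "qbfs \<xi> Z N \<Longrightarrow> f \<in> Z \<Longrightarrow> decomp Z p f (\<lambda>n. 0) f"
  using qbfs_zero by (simp add: decomp_def)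

lemma decomp_left: "qbfs \<xi> Z N \<Longrightarrow> (\<lambda>n. \<bar>v n\<bar> powr p) \<in> Z \<Longrightarrow> decomp Z p v v (\<lambda>n. 0)"
  using qbfs_zero by (simp add: decomp_def)

lemma subset_powsum: "qbfs \<xi> Z N \<Longrightarrow> Z \<subseteq> powsum Z p"
  using decomp_right unfolding powsum_def by blast

lemma powsum_if_power: "qbfs \<xi> Z N \<Longrightarrow> (\<lambda>n. \<bar>v n\<bar> powr p) \<in> Z \<Longrightarrow> v \<in> powsum Z p"
  using decomp_left unfolding powsum_def by blast

lemma pfact_bounded_extension:
  assumes Q: "qbfs \<xi> Z N" and pf: "pfact Z N p S"
  obtains R C where "C \<ge> 0" "\<And>f. f \<in> Z \<Longrightarrow> R f = S f" "lin_on (powsum Z p) R"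
    "\<And>h. h \<in> Z \<Longrightarrow> norm (R h) \<le> C * N h"
    "\<And>v. (\<lambda>n. \<bar>v n\<bar> powr p) \<in> Z \<Longrightarrow> norm (R v) \<le> C * N (\<lambda>n. \<bar>v n\<bar> powr p) powr (1 / p)"
proof -
  obtain R C where RS: "\<forall>f\<in>Z. R f = S f" and R: "lin_on (powsum Z p) R"
    and bound: "\<forall>f\<in>powsum Z p. norm (R f) \<le> C * powsum_norm Z N p f"
    using pf unfolding pfact_def by blast
  have bound_decomp: "norm (R f) \<le> max C 0 * (N (\<lambda>n. \<bar>f1 n\<bar> powr p) powr (1 / p) + N f2)"
    if d: "decomp Z p f f1 f2" for f f1 f2
  proof -
    have f: "f \<in> powsum Z p" using d unfolding powsum_def by blast
    have "norm (R f) \<le> C * powsum_norm Z N p f" using bound f by blast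
    also have "\<dots> \<le> max C 0 * powsum_norm Z N p f"
      using powsum_norm_nonneg[OF Q f] by (intro mult_right_mono) auto
    also have "\<dots> \<le> max C 0 * (N (\<lambda>n. \<bar>f1 n\<bar> powr p) powr (1 / p) + N f2)"
      using powsum_norm_le[OF Q d] by (intro mult_left_mono) auto
    finally show ?thesis .
  qed
  show thesis
  proof (rule that[of "max C 0" R])
    show "norm (R h) \<le> max C 0 * N h" if "h \<in> Z" for h
      using bound_decomp[OF decomp_right[OF Q that]] qbfs_zero[OF Q] by simp
    show "norm (R v) \<le> max C 0 * N (\<lambda>n. \<bar>v n\<bar> powr p) powr (1 / p)"
      if "(\<lambda>n. \<bar>v n\<bar> powr p) \<in> Z" for v
      using bound_decomp[OF decomp_left[OF Q that]] qbfs_zero[OF Q] by simp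
  qed (use RS R in auto)
qed

lemma optimal_atoms_positive:
  fixes T :: "(nat \<Rightarrow> real) \<Rightarrow> 'e::real_normed_vector"
  assumes T: "cont_lin_ell1 T" and tn: "T (unitvec n) \<noteq> 0"
    and sx: "sets \<xi> = UNIV" and ell1Z: "ell1 \<subseteq> Z"
    and Sae: "\<forall>f\<in>Z. \<forall>g\<in>Z. (AE n in \<xi>. f n = g n) \<longrightarrow> S f = S g"
    and ST: "\<forall>x\<in>ell1. S x = T x"
  shows "emeasure \<xi> {n} > 0"
proof (rule ccontr)
  assume "\<not> emeasure \<xi> {n} > 0"
  then have "{n} \<in> null_sets \<xi>" using sx by (auto intro: null_setsI simp: not_gr_zero)
  moreover have "{m \<in> space \<xi>. unitvec n m \<noteq> 0} \<subseteq> {n}" by (auto simp: unitvec_def)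
  ultimately have ae: "AE m in \<xi>. unitvec n m = 0" by (rule AE_I')
  have zero: "(\<lambda>m. 0) \<in> ell1" by (rule ell1_finite_support[of 0]) simp
  have "unitvec n \<in> Z" "(\<lambda>m. 0) \<in> Z" using ell1Z unitvec_ell1 zero by auto
  then have "S (unitvec n) = S (\<lambda>m. 0)" using Sae[rule_format, OF _ _ ae] by blast
  then have "T (unitvec n) = T (\<lambda>m. 0)" using ST unitvec_ell1 zero by simp
  also have "\<dots> = 0" using T zero by (auto simp: cont_lin_ell1_def intro: lin_on_zero)
  finally show False using tn by simp
qed

lemma optimal_domain_l1m:
  fixes T :: "(nat \<Rightarrow> real) \<Rightarrow> 'e::real_normed_vector"
  assumes T: "cont_lin_ell1 T" and Q: "qbfs \<xi> Z N" and soc: "sigma_oc \<xi> Z N"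
    and ell1Z: "ell1 \<subseteq> Z" and S: "lin_on Z S" and ST: "\<forall>x\<in>ell1. S x = T x"
    and pf: "pfact Z N p S" and f: "f \<in> Z"
  shows "f \<in> l1m T" "S f = I_m T f"
proof -
  obtain R C where C: "C \<ge> 0" and RS: "\<And>f. f \<in> Z \<Longrightarrow> R f = S f"
    and bound: "\<And>h. h \<in> Z \<Longrightarrow> norm (R h) \<le> C * N h"
    by (rule pfact_bounded_extension[OF Q pf]) blast
  have lin: "lin_on ell1 T" using T by (simp add: cont_lin_ell1_def)
  have lim: "partial_integral T f A \<longlonglongrightarrow> S (\<lambda>n. indicator A n * f n)" for A
    unfolding partial_integral_def
  proof (rule partial_sums_tendsto_if_tails_vanish[OF S lin])
    let ?tail = "\<lambda>K n. if n < K then 0 else indicator A n * f n"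
    show "(\<lambda>n. if n < K then indicator A n * f n else 0) \<in> Z" for K
      using ell1Z ell1_finite_support[of K] by auto
    show tail: "?tail K \<in> Z" for K by (rule qbfs_solid(1)[OF Q f]) (auto simp: indicator_def)
    show "norm (S (?tail K)) \<le> C * N (\<lambda>n. if n < K then 0 else \<bar>f n\<bar>)" for K
    proof -
      have "N (?tail K) \<le> N (\<lambda>n. if n < K then 0 else \<bar>f n\<bar>)"
        by (rule qbfs_solid(2)[OF Q qbfs_tail[OF Q f]]) (auto simp: indicator_def)
      then have "C * N (?tail K) \<le> C * N (\<lambda>n. if n < K then 0 else \<bar>f n\<bar>)"
        using C by (rule mult_left_mono)
      moreover have "norm (S (?tail K)) \<le> C * N (?tail K)" using bound[OF tail] RS[OF tail] by simp
      ultimately show ?thesis by linarith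
    qed
    show "(\<lambda>K. C * N (\<lambda>n. if n < K then 0 else \<bar>f n\<bar>)) \<longlonglongrightarrow> 0"
      using sigma_oc_tail_tendsto_zero[OF Q soc f] by (simp add: tendsto_mult_right_zero)
  qed (use ST in auto)
  show mem: "f \<in> l1m T" using lim by (intro l1m_if_partial_integral_convergent) blast
  show "S f = I_m T f" using vec_int_eq_lim[OF lim[of UNIV] mem] by (simp add: I_m_def)
qed

lemma optimal_domain_root_l1m:
  fixes T :: "(nat \<Rightarrow> real) \<Rightarrow> 'e::real_normed_vector"
  assumes T: "cont_lin_ell1 T" and p: "p > 0" and Q: "qbfs \<xi> Z N" and soc: "sigma_oc \<xi> Z N"
    and ell1Z: "ell1 \<subseteq> Z" and ST: "\<forall>x\<in>ell1. S x = T x"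
    and pf: "pfact Z N p S" and f: "f \<in> Z"
  shows "(\<lambda>n. \<bar>f n\<bar> powr (1 / p)) \<in> l1m T"
proof (rule l1m_if_partial_integral_convergent)
  fix A
  obtain R C where C: "C \<ge> 0" and RS: "\<And>f. f \<in> Z \<Longrightarrow> R f = S f" and R: "lin_on (powsum Z p) R"
    and bound: "\<And>v. (\<lambda>n. \<bar>v n\<bar> powr p) \<in> Z \<Longrightarrow> norm (R v) \<le> C * N (\<lambda>n. \<bar>v n\<bar> powr p) powr (1 / p)"
    by (rule pfact_bounded_extension[OF Q pf]) blast
  have lin: "lin_on ell1 T" using T by (simp add: cont_lin_ell1_def)
  define w where "w n = indicator A n * \<bar>f n\<bar> powr (1 / p)" for n
  let ?tail = "\<lambda>K n. if n < K then 0 else w n"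
  have tail_p: "\<bar>?tail K n\<bar> powr p = (if n < K then 0 else indicator A n * \<bar>f n\<bar>)" for K n
    using p by (auto simp: w_def powr_powr indicator_def)
  have tail_Z: "(\<lambda>n. \<bar>?tail K n\<bar> powr p) \<in> Z" for K
    unfolding tail_p by (rule qbfs_solid(1)[OF Q f]) (auto simp: indicator_def)
  have "(\<lambda>K. \<Sum>n<K. w n *\<^sub>R T (unitvec n)) \<longlonglongrightarrow> R w"
  proof (rule partial_sums_tendsto_if_tails_vanish[OF R lin])
    show "(\<lambda>n. if n < K then w n else 0) \<in> powsum Z p" for K
      using ell1Z subset_powsum[OF Q, of p] ell1_finite_support[of K "\<lambda>n. if n < K then w n else 0"]
      by auto
    show "?tail K \<in> powsum Z p" for K by (rule powsum_if_power[OF Q tail_Z])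
    show "R y = T y" if "y \<in> ell1" for y
    proof -
      have "y \<in> Z" using ell1Z that by (rule subsetD)
      then show ?thesis using RS ST that by simp
    qed
    show "norm (R (?tail K)) \<le> C * N (\<lambda>n. if n < K then 0 else \<bar>f n\<bar>) powr (1 / p)" for K
    proof -
      have "N (\<lambda>n. \<bar>?tail K n\<bar> powr p) \<le> N (\<lambda>n. if n < K then 0 else \<bar>f n\<bar>)"
        unfolding tail_p by (rule qbfs_solid(2)[OF Q qbfs_tail[OF Q f]]) (auto simp: indicator_def)
      then have "N (\<lambda>n. \<bar>?tail K n\<bar> powr p) powr (1 / p) \<le> N (\<lambda>n. if n < K then 0 else \<bar>f n\<bar>) powr (1 / p)"
        using qbfs_nonneg[OF Q tail_Z] p by (intro powr_mono2) auto
      then show ?thesis using order_trans[OF bound[OF tail_Z, of K] mult_left_mono[OF _ C]] by blast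
    qed
    have "(\<lambda>K. N (\<lambda>n. if n < K then 0 else \<bar>f n\<bar>) powr (1 / p)) \<longlonglongrightarrow> 0"
      by (rule tendsto_zero_powrI[OF sigma_oc_tail_tendsto_zero[OF Q soc f] tendsto_const])
        (use qbfs_nonneg[OF Q qbfs_tail[OF Q f]] p in auto)
    then show "(\<lambda>K. C * N (\<lambda>n. if n < K then 0 else \<bar>f n\<bar>) powr (1 / p)) \<longlonglongrightarrow> 0"
      by (simp add: tendsto_mult_right_zero)
  qed
  then show "\<exists>v. partial_integral T (\<lambda>n. \<bar>f n\<bar> powr (1 / p)) A \<longlonglongrightarrow> v"
    unfolding partial_integral_def w_def by blast
qed

lemma optimalI:
  fixes T :: "(nat \<Rightarrow> real) \<Rightarrow> 'e::real_normed_vector"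
  assumes T: "cont_lin_ell1 T" and tn: "\<forall>n. T (unitvec n) \<noteq> 0" and p: "p > 0"
    and X: "\<And>f. f \<in> l1m T \<Longrightarrow> (\<lambda>n. \<bar>f n\<bar> powr (1 / p)) \<in> l1m T \<Longrightarrow> f \<in> X"
  shows "optimal T p X"
  unfolding optimal_def
proof (intro allI impI)
  fix \<xi> :: "nat measure" and Z N and S :: "(nat \<Rightarrow> real) \<Rightarrow> 'e"
  assume sx: "sets \<xi> = UNIV" and Q: "qbfs \<xi> Z N" and soc: "sigma_oc \<xi> Z N" and ell1Z: "ell1 \<subseteq> Z"
    and Sae: "\<forall>f\<in>Z. \<forall>g\<in>Z. (AE n in \<xi>. f n = g n) \<longrightarrow> S f = S g" and S: "lin_on Z S"
    and ST: "\<forall>x\<in>ell1. S x = T x" and pf: "pfact Z N p S"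
  note domain = optimal_domain_l1m[OF T Q soc ell1Z S ST pf] optimal_domain_root_l1m[OF T p Q soc ell1Z ST pf]
  have "\<forall>n. 0 < emeasure \<xi> {n}" using optimal_atoms_positive[OF T _ sx ell1Z Sae ST] tn by blast
  moreover have "Z \<subseteq> X" using X domain by blast
  moreover have "\<forall>f\<in>Z. S f = I_m T f" using domain by blast
  ultimately show "(\<forall>n. 0 < emeasure \<xi> {n}) \<and> Z \<subseteq> X \<and> (\<forall>f\<in>Z. S f = I_m T f)" by blast
qed

section \<open>Factorization through the p-th power\<close>

lemma pfact_I_m:
  fixes T :: "(nat \<Rightarrow> real) \<Rightarrow> 'e::banach"
  assumes N: "\<And>f. f \<in> Z \<Longrightarrow> 0 \<le> N f"
    and power: "\<And>f. (\<lambda>n. \<bar>f n\<bar> powr p) \<in> Z \<Longrightarrow>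
      f \<in> l1m T \<and> norm (I_m T f) \<le> Cpow * N (\<lambda>n. \<bar>f n\<bar> powr p) powr (1 / p)"
    and base: "\<And>f. f \<in> Z \<Longrightarrow> f \<in> l1m T \<and> norm (I_m T f) \<le> Cbase * N f"
    and C: "Cpow \<ge> 0" "Cbase \<ge> 0"
  shows "pfact Z N p (I_m T)"
  unfolding pfact_def
proof (intro exI[of _ "I_m T"] conjI ballI)
  have split: "f1 \<in> l1m T" "f2 \<in> l1m T" "I_m T f = I_m T f1 + I_m T f2"
    if d: "decomp Z p f f1 f2" for f f1 f2
  proof -
    show f1: "f1 \<in> l1m T" and f2: "f2 \<in> l1m T" using power base d unfolding decomp_def by blast+
    have "f = (\<lambda>n. f1 n + f2 n)" using d by (simp add: decomp_def fun_eq_iff)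
    then show "I_m T f = I_m T f1 + I_m T f2" unfolding I_m_def using l1m_add(2)[OF f1 f2] by simp
  qed
  have l1m: "f \<in> l1m T" if f: "f \<in> powsum Z p" for f
  proof -
    obtain f1 f2 where d: "decomp Z p f f1 f2" using f unfolding powsum_def by blast
    then have "f = (\<lambda>n. f1 n + f2 n)" by (simp add: decomp_def fun_eq_iff)
    then show ?thesis using l1m_add(1)[OF split(1,2)[OF d]] by simp
  qed
  show "lin_on (powsum Z p) (I_m T)"
    unfolding lin_on_def I_m_def using l1m l1m_add(2) vec_int_scale by blast
  show "\<exists>C. \<forall>f\<in>powsum Z p. norm (I_m T f) \<le> C * powsum_norm Z N p f"
  proof (intro exI[of _ "Cpow + Cbase + 1"] ballI)
    fix f assume f: "f \<in> powsum Z p"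
    have "norm (I_m T f) / (Cpow + Cbase + 1) \<le> powsum_norm Z N p f"
    proof (rule le_powsum_norm[OF f])
      fix f1 f2 assume d: "decomp Z p f f1 f2"
      let ?a1 = "N (\<lambda>n. \<bar>f1 n\<bar> powr p) powr (1 / p)" and ?a2 = "N f2"
      have "?a2 \<ge> 0" using N d unfolding decomp_def by blast
      have "norm (I_m T f) \<le> norm (I_m T f1) + norm (I_m T f2)"
        unfolding split(3)[OF d] by (rule norm_triangle_ineq)
      also have "\<dots> \<le> Cpow * ?a1 + Cbase * ?a2" using power base d unfolding decomp_def by (meson add_mono)
      also have "\<dots> \<le> (Cpow + Cbase + 1) * (?a1 + ?a2)"
        using C \<open>?a2 \<ge> 0\<close> by (simp add: algebra_simps add_increasing mult_left_mono)
      finally show "norm (I_m T f) / (Cpow + Cbase + 1) \<le> ?a1 + ?a2"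
        using C by (simp add: divide_le_eq mult.commute)
    qed
    then show "norm (I_m T f) \<le> (Cpow + Cbase + 1) * powsum_norm Z N p f"
      using C by (simp add: divide_le_eq mult.commute)
  qed
qed simp

lemma l1m_if_abs_l1m:
  fixes T :: "(nat \<Rightarrow> real) \<Rightarrow> 'e::banach"
  assumes "(\<lambda>n. \<bar>f n\<bar>) \<in> l1m T"
  shows "f \<in> l1m T"
  using l1m_mult_bounded[OF assms, of "\<lambda>n. sgn (f n)" 1] by (simp add: sgn_mult_abs abs_sgn_eq)

lemma power_dominated_lrm:
  fixes T :: "(nat \<Rightarrow> real) \<Rightarrow> 'e::banach"
  assumes PD: "power_dominated T p" and p: "p > 0"
  shows "lrm T (1 / p) \<subseteq> l1m T" "pfact (lrm T (1 / p)) (norm_lrm T (1 / p)) p (I_m T)"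
proof -
  obtain C where C: "C > 0" and mem: "\<And>y. (\<lambda>n. \<bar>y n\<bar> powr (1 / p)) \<in> l1m T \<Longrightarrow> y \<in> l1m T"
    and bound: "\<And>y A. (\<lambda>n. \<bar>y n\<bar> powr (1 / p)) \<in> l1m T \<Longrightarrow>
      norm (vec_int T A y) \<le> 2 * (C * norm_l1m T (\<lambda>n. \<bar>y n\<bar> powr (1 / p))) powr p"
    by (rule power_dominated_l1m[OF PD p]) blast
  show "lrm T (1 / p) \<subseteq> l1m T" using mem by (auto simp: lrm_def)
  show "pfact (lrm T (1 / p)) (norm_lrm T (1 / p)) p (I_m T)"
  proof (rule pfact_I_m[where Cpow = 1 and Cbase = "2 * C powr p"])
    fix f assume "(\<lambda>n. \<bar>f n\<bar> powr p) \<in> lrm T (1 / p)"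
    then have abs_f: "(\<lambda>n. \<bar>f n\<bar>) \<in> l1m T" using p by (simp add: lrm_def powr_powr)
    have "norm_lrm T (1 / p) (\<lambda>n. \<bar>f n\<bar> powr p) powr (1 / p) = norm_l1m T f"
      using p norm_l1m_nonneg[OF abs_f]
      by (simp add: norm_lrm_def powr_powr norm_l1m_abs)
    then show "f \<in> l1m T \<and> norm (I_m T f) \<le> 1 * norm_lrm T (1 / p) (\<lambda>n. \<bar>f n\<bar> powr p) powr (1 / p)"
      using l1m_if_abs_l1m[OF abs_f] norm_vec_int_le by (simp add: I_m_def)
  next
    fix f assume "f \<in> lrm T (1 / p)"
    then have u: "(\<lambda>n. \<bar>f n\<bar> powr (1 / p)) \<in> l1m T" by (simp add: lrm_def)
    then show "f \<in> l1m T \<and> norm (I_m T f) \<le> 2 * C powr p * norm_lrm T (1 / p) f"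
      using mem[OF u] bound[OF u, of UNIV] C norm_l1m_nonneg[OF u]
      by (simp add: I_m_def norm_lrm_def powr_mult)
  qed (use C in \<open>auto simp: norm_lrm_def\<close>)
qed

lemma power_dominated_root_pfact:
  fixes T :: "(nat \<Rightarrow> real) \<Rightarrow> 'e::banach"
  assumes PD: "power_dominated T (1 / p)" and p: "p > 0"
  shows "pfact (l1m T) (norm_l1m T) p (I_m T)"
proof -
  obtain C where C: "C > 0" and mem: "\<And>y. (\<lambda>n. \<bar>y n\<bar> powr p) \<in> l1m T \<Longrightarrow> y \<in> l1m T"
    and bound: "\<And>y A. (\<lambda>n. \<bar>y n\<bar> powr p) \<in> l1m T \<Longrightarrow>
      norm (vec_int T A y) \<le> 2 * (C * norm_l1m T (\<lambda>n. \<bar>y n\<bar> powr p)) powr (1 / p)"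
    by (rule power_dominated_l1m[OF PD]) (use p in auto)
  show ?thesis
  proof (rule pfact_I_m[where Cpow = "2 * C powr (1 / p)" and Cbase = 1])
    fix f assume u: "(\<lambda>n. \<bar>f n\<bar> powr p) \<in> l1m T"
    then show "f \<in> l1m T \<and>
        norm (I_m T f) \<le> 2 * C powr (1 / p) * norm_l1m T (\<lambda>n. \<bar>f n\<bar> powr p) powr (1 / p)"
      using mem[OF u] bound[OF u, of UNIV] C norm_l1m_nonneg[OF u] by (simp add: I_m_def powr_mult)
  next
    fix f assume "f \<in> l1m T"
    then show "f \<in> l1m T \<and> norm (I_m T f) \<le> 1 * norm_l1m T f" by (simp add: I_m_def norm_vec_int_le)
  qed (use C norm_l1m_nonneg in auto)
qed

theorem corollary7p6:
  fixes T :: "(nat \<Rightarrow> real) \<Rightarrow> 'e::banach" and p :: real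
  assumes "cont_lin_ell1 T"
    and "\<forall>n. T (unitvec n) \<noteq> 0"
    and "p > 1"
  shows "(power_dominated T p \<and> has_ext_ellp T p \<longrightarrow>
            ell1 \<subseteq> lrm T (1/p) \<and> lrm T (1/p) \<subseteq> l1m T \<and>
            (\<forall>x\<in>ell1. T x = I_m T x) \<and>
            pfact (lrm T (1/p)) (norm_lrm T (1/p)) p (I_m T) \<and>
            optimal T p (lrm T (1/p)))
       \<and> (power_dominated T (1/p) \<longrightarrow>
            ell1 \<subseteq> l1m T \<and>
            (\<forall>x\<in>ell1. T x = I_m T x) \<and>
            pfact (l1m T) (norm_l1m T) p (I_m T) \<and>
            optimal T p (l1m T))"
proof -
  note T = assms(1) and tn = assms(2)
  have p: "p > 0" using assms(3) by simp
  have ell1: "ell1 \<subseteq> l1m T" "\<forall>x\<in>ell1. T x = I_m T x" using cont_lin_ell1_l1m[OF T] by auto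
  have "ell1 \<subseteq> lrm T (1/p) \<and> lrm T (1/p) \<subseteq> l1m T \<and> (\<forall>x\<in>ell1. T x = I_m T x) \<and>
      pfact (lrm T (1/p)) (norm_lrm T (1/p)) p (I_m T) \<and> optimal T p (lrm T (1/p))"
    if PD: "power_dominated T p" and ext: "has_ext_ellp T p"
    using has_ext_ellp_root_l1m[OF T ext p] power_dominated_lrm[OF PD p] ell1(2)
      optimalI[OF T tn p, of "lrm T (1/p)"]
    by (auto simp: lrm_def)
  moreover have "ell1 \<subseteq> l1m T \<and> (\<forall>x\<in>ell1. T x = I_m T x) \<and>
      pfact (l1m T) (norm_l1m T) p (I_m T) \<and> optimal T p (l1m T)"
    if PD: "power_dominated T (1/p)"
    using ell1 power_dominated_root_pfact[OF PD p] optimalI[OF T tn p, of "l1m T"] by blast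
  ultimately show ?thesis by blast
qed

end
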